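(* Assume (A1)–(A4) below and $a<0$. Let $u_0\in H^2(\mathbb{R}_+)$ with $u_0(0)=0$. For $\Delta t\in(0,1]$ let $u^{\rm app}$, $\varepsilon_{j,n}$ and $\eta_{j,n}$ be as defined below. Then there exists $C>0$, independent of $u_0$ and $\Delta t\in(0,1]$, such that $$\sup_{n\ge2k}\sum_{j\ge r}\Delta x|\varepsilon_{j,n}|^2\le C\,\Delta t^2\|u_0''\|^2_{L^2(\mathbb{R}^+)},$$ $$\sup_{k\le n\le 2k-1}\sum_{j\ge r}\Delta x|\varepsilon_{j,n}|^2\le C\,\Delta t\,\|u_0'\|^2_{H^1(\mathbb{R}^+)},$$ $$\sum_{n\ge k}\sum_{j=0}^{r-1}\Delta t|\eta_{j,n}|^2\le C\,\Delta t^2\|u_0'\|^2_{L^2(\mathbb{R}^+)}.$$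
   Context: Fix the following data: - a real number $a\neq0$; - nonnegative integers $p,r$ and real coefficients $a_{-r},\dots,a_p$ with $a_{-r}\neq0$ and $a_p\neq0$; - an integer $k\ge1$ and real coefficients $\alpha_0,\dots,\alpha_k$, $\beta_0,\dots,\beta_{k-1}$ with $\alpha_k=1$ and $|\alpha_0|+|\beta_0|>0$; - a fixed ratio $\lambda>0$. For $\Delta t\in(0,1]$ set $\Delta x=\Delta t/\lambda$, $x_j=j\Delta x$ and $t^n=n\Delta t$. Let $\mathcal A(z)=\sum_{\ell=-r}^p a_\ell z^\ell$ for $z\in\mathbb{C}\setminus\{0\}$. Assumptions: (A1) $\sum_{\ell=-r}^p a_\ell=0$ and $\sum_{\ell=-r}^p\ell a_\ell=a$. (A2) $\sum_{\sigma=0}^k\alpha_\sigma=0$ and $\sum_{\sigma=0}^k\sigma\alpha_\sigma=\sum_{\sigma=0}^{k-1}\beta_\sigma$. (A3) There is $C>0$ such that for all $\Delta t\in(0,1]$, every solution $(u_j^n)_{j\in\mathbb{Z},n\in\mathbb{N}}$ of $\sum_{\sigma=0}^k\alpha_\sigma u_j^{n+\sigma}+\lambda\sum_{\sigma=0}^{k-1}\beta_\sigma\sum_{\ell=-r}^pa_\ell u_{j+\ell}^{n+\sigma}=0$ ($j\in\mathbb{Z}$, $n\in\mathbb{N}$) satisfies $\sup_{n}\sum_{j\in\mathbb{Z}}\Delta x|u_j^n|^2\le C\sum_{\sigma=0}^{k-1}\sum_{j\in\mathbb{Z}}\Delta x|u_j^\sigma|^2$. (A4) $\mathcal A(e^{i\theta})\neq0$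 for all $\theta\in[-\pi,\pi]\setminus\{0\}$. Definitions (case $a<0$): - $(w_j)_{j\ge0}$ is the unique real sequence with $w_0=\dots=w_{r-1}=-1$, $\sum_{\ell=-r}^pa_\ell w_{j+\ell+r}=0$ for $j\ge0$, and $w_j\to0$. - $(\widetilde w_j)_{j\ge0}$ is the unique sequence with $\sum_{\ell=-r}^pa_\ell\widetilde w_{j+\ell}+w_j=0$ for $j\ge r$, $\widetilde w_0=\dots=\widetilde w_{r-1}=0$, and $\widetilde w_j\to0$. Both sequences exist under these assumptions and decay exponentially. - $u^{\rm int}_{j,n}=\frac1{\Delta x}\int_{x_j}^{x_{j+1}}u_0(x-a t^n)dx$ and $u^{\rm tr}_n=\frac1{\Delta t}\int_{t^n}^{t^{n+1}}u_0(-a t)dt$. - $u^{\rm bl,0}_{j,n}=u^{\rm bl,1}_{j,n}=0$ for $n=0,\dots,k-1$. For $n\ge k$: $u^{\rm bl,0}_{j,n}=u^{\rm tr}_nw_j$ and $u^{\rm bl,1}_{j,n}=\big(\Delta t\sum_{\sigma=0}^{k-1}\beta_\sigma\big)^{-1}\big(\sum_{\sigma=0}^k\alpha_\sigma u^{\rm tr}_{n+\sigma}\big)\widetilde w_j$. - $u^{\rm app}_{j,n}=u^{\rm int}_{j,n}+u^{\rm bl,0}_{j,n}+\Delta x\,u^{\rm bl,1}_{j,n}$. - $\varepsilon_{j,n+k}=\frac1{\Delta t}\big(\sum_{\sigma=0}^k\alpha_\sigma u^{\rm app}_{j,n+\sigma}+\lambda\sum_{\sigma=0}^{k-1}\beta_\sigma\sum_{\ell=-r}^pa_\ell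 u^{\rm app}_{j+\ell,n+\sigma}\big)$ for $j\ge r$, $n\ge0$. - $\eta_{j,n}=u^{\rm app}_{j,n}$ for $0\le j\le r-1$, $n\ge k$. *)

theory Defs
  imports "HOL-Analysis.Analysis"
begin

definition L2_Rplus :: "(real \<Rightarrow> real) \<Rightarrow> bool" where
  "L2_Rplus f \<longleftrightarrow> set_borel_measurable lborel {0..} f
      \<and> set_integrable lborel {0..} (\<lambda>x. (f x)\<^sup>2)"

definition L2sq :: "(real \<Rightarrow> real) \<Rightarrow> real" where
  "L2sq f = (LINT x:{0..}|lborel. (f x)\<^sup>2)"

text \<open>H2 on the half-line: u0, u0' = u1, u0'' = u2 all in L2(R+), with u0 and u1
  absolutely continuous (the continuous representative), i.e. u0 is the integral of its
  weak derivative u1, and u1 the integral of its weak derivative u2.\<close>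
definition H2_Rplus :: "(real \<Rightarrow> real) \<Rightarrow> (real \<Rightarrow> real) \<Rightarrow> (real \<Rightarrow> real) \<Rightarrow> bool" where
  "H2_Rplus u0 u1 u2 \<longleftrightarrow> L2_Rplus u0 \<and> L2_Rplus u1 \<and> L2_Rplus u2
      \<and> (\<forall>x\<ge>0. u0 x = u0 0 + (LINT t:{0..x}|lborel. u1 t))
      \<and> (\<forall>x\<ge>0. u1 x = u1 0 + (LINT t:{0..x}|lborel. u2 t))"

definition dxof :: "real \<Rightarrow> real \<Rightarrow> real" where
  "dxof lam dt = dt / lam"

definition u_int :: "(real \<Rightarrow> real) \<Rightarrow> real \<Rightarrow> real \<Rightarrow> real \<Rightarrow> nat \<Rightarrow> nat \<Rightarrow> real" where
  "u_int u0 a lam dt j n = (1 / dxof lam dt) *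
     (LINT x:{real j * dxof lam dt .. real (j + 1) * dxof lam dt}|lborel. u0 (x - a * (real n * dt)))"

definition u_tr :: "(real \<Rightarrow> real) \<Rightarrow> real \<Rightarrow> real \<Rightarrow> nat \<Rightarrow> real" where
  "u_tr u0 a dt n = (1 / dt) * (LINT t:{real n * dt .. real (n + 1) * dt}|lborel. u0 (- a * t))"

definition u_bl0 :: "(real \<Rightarrow> real) \<Rightarrow> real \<Rightarrow> real \<Rightarrow> nat \<Rightarrow> (nat \<Rightarrow> real) \<Rightarrow> nat \<Rightarrow> nat \<Rightarrow> real" where
  "u_bl0 u0 a dt k w j n = (if n < k then 0 else u_tr u0 a dt n * w j)"

definition u_bl1 :: "(real \<Rightarrow> real) \<Rightarrow> real \<Rightarrow> real \<Rightarrow> nat \<Rightarrow> (nat \<Rightarrow> real) \<Rightarrow> (nat \<Rightarrow> real)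
                     \<Rightarrow> (nat \<Rightarrow> real) \<Rightarrow> nat \<Rightarrow> nat \<Rightarrow> real" where
  "u_bl1 u0 a dt k alpha beta wt j n = (if n < k then 0 else
      inverse (dt * (\<Sum>\<sigma><k. beta \<sigma>)) * (\<Sum>\<sigma>\<le>k. alpha \<sigma> * u_tr u0 a dt (n + \<sigma>)) * wt j)"

definition u_app :: "(real \<Rightarrow> real) \<Rightarrow> real \<Rightarrow> real \<Rightarrow> real \<Rightarrow> nat \<Rightarrow> (nat \<Rightarrow> real) \<Rightarrow> (nat \<Rightarrow> real)
                     \<Rightarrow> (nat \<Rightarrow> real) \<Rightarrow> (nat \<Rightarrow> real) \<Rightarrow> nat \<Rightarrow> nat \<Rightarrow> real" where
  "u_app u0 a lam dt k alpha beta w wt j n =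
     u_int u0 a lam dt j n + u_bl0 u0 a dt k w j n + dxof lam dt * u_bl1 u0 a dt k alpha beta wt j n"

text \<open>Consistency error eps_{j,m}, meaningful for m >= k (m = n + k) and j >= r.\<close>
definition eps_err :: "(real \<Rightarrow> real) \<Rightarrow> real \<Rightarrow> real \<Rightarrow> real \<Rightarrow> nat \<Rightarrow> (nat \<Rightarrow> real) \<Rightarrow> (nat \<Rightarrow> real)
                     \<Rightarrow> (nat \<Rightarrow> real) \<Rightarrow> (nat \<Rightarrow> real) \<Rightarrow> nat \<Rightarrow> nat \<Rightarrow> (int \<Rightarrow> real) \<Rightarrow> nat \<Rightarrow> nat \<Rightarrow> real" where
  "eps_err u0 a lam dt k alpha beta w wt r p A j m =
     (1 / dt) * ((\<Sum>\<sigma>\<le>k. alpha \<sigma> * u_app u0 a lam dt k alpha beta w wt j (m - k + \<sigma>))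
       + lam * (\<Sum>\<sigma><k. beta \<sigma> * (\<Sum>l = - int r..int p.
            A l * u_app u0 a lam dt k alpha beta w wt (nat (int j + l)) (m - k + \<sigma>))))"

definition eta_err :: "(real \<Rightarrow> real) \<Rightarrow> real \<Rightarrow> real \<Rightarrow> real \<Rightarrow> nat \<Rightarrow> (nat \<Rightarrow> real) \<Rightarrow> (nat \<Rightarrow> real)
                     \<Rightarrow> (nat \<Rightarrow> real) \<Rightarrow> (nat \<Rightarrow> real) \<Rightarrow> nat \<Rightarrow> nat \<Rightarrow> real" where
  "eta_err u0 a lam dt k alpha beta w wt j n = u_app u0 a lam dt k alpha beta w wt j n"

definition stability_A3 :: "real \<Rightarrow> nat \<Rightarrow> nat \<Rightarrow> (int \<Rightarrow> real) \<Rightarrow> nat \<Rightarrow> (nat \<Rightarrow> real) \<Rightarrow> (nat \<Rightarrow> real) \<Rightarrow> bool" where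
  "stability_A3 lam r p A k alpha beta \<longleftrightarrow>
    (\<exists>C>0. \<forall>dt. 0 < dt \<and> dt \<le> 1 \<longrightarrow>
      (\<forall>u :: int \<Rightarrow> nat \<Rightarrow> real.
         (\<forall>j n. (\<Sum>\<sigma>\<le>k. alpha \<sigma> * u j (n + \<sigma>))
                + lam * (\<Sum>\<sigma><k. beta \<sigma> * (\<Sum>l = - int r..int p. A l * u (j + l) (n + \<sigma>))) = 0)
         \<longrightarrow> (\<forall>\<sigma><k. (\<lambda>j. dxof lam dt * \<bar>u j \<sigma>\<bar>\<^sup>2) summable_on UNIV)
         \<longrightarrow> (\<forall>n. (\<lambda>j. dxof lam dt * \<bar>u j n\<bar>\<^sup>2) summable_on UNIV
                 \<and> (\<Sum>\<^sub>\<infinity>j. dxof lam dt * \<bar>u j n\<bar>\<^sup>2)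
                     \<le> C * (\<Sum>\<sigma><k. \<Sum>\<^sub>\<infinity>j. dxof lam dt * \<bar>u j \<sigma>\<bar>\<^sup>2))))"

end

theory Submission
  imports Defs "HOL-Computational_Algebra.Fundamental_Theorem_Algebra"
begin

text \<open>Let \<open>F\<close> be the primitive of \<open>u\<^sub>0\<close> and \<open>c = -a\<close>. The averages \<open>u\<^sup>i\<^sup>n\<^sup>t\<close> and \<open>u\<^sup>t\<^sup>r\<close> are difference
  quotients of \<open>F\<close> along the characteristics, so after the recurrences for \<open>w\<close> and \<open>w\<^sub>t\<close>
  are used, \<open>\<epsilon>\<^sub>j\<^sub>,\<^sub>n\<close> splits into an interior residual plus \<open>w\<^sub>j\<close> and \<open>w\<^sub>t\<^sub>,\<^sub>j\<close> times two
  trace residuals, and \<open>\<eta>\<^sub>j\<^sub>,\<^sub>n\<close> is a single boundary residual. Each residual is a linear functional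
  of \<open>F\<close> bounded by \<open>O(\<Delta>t\<^sup>-\<^sup>2)\<close> (resp. \<open>O(\<Delta>t\<^sup>-\<^sup>1)\<close> for \<open>\<eta>\<close>) times the supremum of \<open>F\<close> over a
  window of length \<open>O(\<Delta>t)\<close>, and the consistency conditions (A1), (A2) make it vanish on
  quadratics (affine functions for \<open>\<eta>\<close>). Subtracting the Taylor polynomial of \<open>F\<close> therefore
  bounds it by the \<open>L\<^sup>1\<close> norm of \<open>u\<^sub>0''\<close> (resp. \<open>u\<^sub>0'\<close>) on the window; Cauchy-Schwarz and the
  bounded overlap of the windows sum this up to the \<open>L\<^sup>2\<close> norm, while \<open>w\<close> and \<open>w\<^sub>t\<close> enter through
  their \<open>\<ell>\<^sup>2\<close> norms, finite because decaying solutions of a linear recurrence decay geometrically.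
  For \<open>n < 2k\<close> the trace windows reach the corner, where only \<open>u\<^sub>0(0) = 0\<close> and the bound
  \<open>\<parallel>u\<^sub>0'\<parallel>\<^sub>\<infinity>\<^sup>2 \<le> 2 \<parallel>u\<^sub>0'\<parallel>\<^sup>2\<^sub>H\<^sub>1\<close> are available, which costs one power of \<open>\<Delta>t\<close>.\<close>

section \<open>Geometric decay of decaying solutions of linear recurrences\<close>

definition recurrence_op :: "complex poly \<Rightarrow> (nat \<Rightarrow> complex) \<Rightarrow> nat \<Rightarrow> complex" where
  "recurrence_op P w n = (\<Sum>i\<le>degree P. coeff P i * w (n + i))"

lemma recurrence_op_degree_le:
  assumes "degree P \<le> D"
  shows "recurrence_op P w n = (\<Sum>i\<le>D. coeff P i * w (n + i))"
proof -
  have "(\<Sum>i\<le>D. coeff P i * w (n + i)) = (\<Sum>i\<le>degree P. coeff P i * w (n + i))"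
    by (rule sum.mono_neutral_right) (use assms in \<open>auto simp: coeff_eq_0 not_le\<close>)
  thus ?thesis by (simp add: recurrence_op_def)
qed

lemma recurrence_op_linear_factor:
  assumes "R \<noteq> 0"
  shows "recurrence_op ([:-\<mu>, 1:] * R) w n = recurrence_op R (\<lambda>m. w (Suc m) - \<mu> * w m) n"
proof -
  let ?D = "degree R"
  have deg: "degree ([:-\<mu>, 1:] * R) = Suc ?D"
    using degree_mult_eq[of "[:-\<mu>, 1:]" R] assms by simp
  have coeff: "coeff ([:-\<mu>, 1:] * R) i = coeff (pCons 0 R) i - \<mu> * coeff R i" for i
    by (cases i) (simp_all add: mult_pCons_left algebra_simps)
  have "recurrence_op ([:-\<mu>, 1:] * R) w n
      = (\<Sum>i\<le>Suc ?D. coeff (pCons 0 R) i * w (n + i)) - \<mu> * (\<Sum>i\<le>Suc ?D. coeff R i * w (n + i))"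
    unfolding recurrence_op_def deg by (simp add: coeff algebra_simps sum_subtractf sum_distrib_left)
  also have "(\<Sum>i\<le>Suc ?D. coeff (pCons 0 R) i * w (n + i)) = (\<Sum>i\<le>?D. coeff R i * w (Suc (n + i)))"
    by (subst sum.atMost_Suc_shift) simp
  also have "(\<Sum>i\<le>Suc ?D. coeff R i * w (n + i)) = (\<Sum>i\<le>?D. coeff R i * w (n + i))"
    by (simp add: coeff_eq_0)
  finally show ?thesis
    by (simp add: recurrence_op_def sum_subtractf sum_distrib_left algebra_simps)
qed

definition geometric_decay :: "(nat \<Rightarrow> 'a::real_normed_vector) \<Rightarrow> bool" where
  "geometric_decay v \<longleftrightarrow> (\<exists>C \<rho>. 0 \<le> \<rho> \<and> \<rho> < 1 \<and> (\<forall>n. norm (v n) \<le> C * \<rho> ^ n))"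

lemma geometric_decayE:
  assumes "geometric_decay v"
  obtains C \<rho> where "0 \<le> C" "0 \<le> \<rho>" "\<rho> < 1" "\<And>n. norm (v n) \<le> C * \<rho> ^ n"
proof -
  obtain C \<rho> where \<rho>: "0 \<le> \<rho>" "\<rho> < 1" and C: "\<And>n. norm (v n) \<le> C * \<rho> ^ n"
    using assms unfolding geometric_decay_def by blast
  have "0 \<le> C" using order_trans[OF norm_ge_zero C[of 0]] by simp
  with \<rho> C that show ?thesis by blast
qed

lemma geometric_decay_zero: "geometric_decay (\<lambda>n. 0)"
  unfolding geometric_decay_def by (rule exI[of _ 0], rule exI[of _ 0]) auto

lemma geometric_decay_of_real_iff:
  "geometric_decay (\<lambda>n. complex_of_real (v n)) \<longleftrightarrow> geometric_decay v"
  unfolding geometric_decay_def by simp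

lemma geometric_decay_scale_shift:
  fixes v :: "nat \<Rightarrow> real"
  assumes "geometric_decay v"
  shows "geometric_decay (\<lambda>n. c * v (n + m))"
proof -
  obtain C \<rho> where \<rho>: "0 \<le> \<rho>" "\<rho> < 1" and C: "\<And>n. \<bar>v n\<bar> \<le> C * \<rho> ^ n"
    using geometric_decayE[OF assms] by (metis real_norm_def)
  have "\<bar>c * v (n + m)\<bar> \<le> (\<bar>c\<bar> * C * \<rho> ^ m) * \<rho> ^ n" for n
    using mult_left_mono[OF C[of "n + m"], of "\<bar>c\<bar>"] by (simp add: power_add abs_mult algebra_simps)
  thus ?thesis unfolding geometric_decay_def using \<rho> by auto
qed

lemma geometric_decay_summable_square:
  fixes v :: "nat \<Rightarrow> real"
  assumes "geometric_decay v"
  shows "summable (\<lambda>n. (v n)\<^sup>2)"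
proof -
  obtain C \<rho> where C: "0 \<le> C" and \<rho>: "0 \<le> \<rho>" "\<rho> < 1" and bound: "\<And>n. \<bar>v n\<bar> \<le> C * \<rho> ^ n"
    using geometric_decayE[OF assms] by (metis real_norm_def)
  show ?thesis
  proof (rule summable_comparison_test')
    show "summable (\<lambda>n. C\<^sup>2 * (\<rho>\<^sup>2) ^ n)"
      using \<rho> by (intro summable_mult summable_geometric) (simp add: abs_square_less_1)
    show "norm ((v n)\<^sup>2) \<le> C\<^sup>2 * (\<rho>\<^sup>2) ^ n" for n
      using power_mono[OF bound[of n] abs_ge_zero, of 2]
      by (simp add: power_mult_distrib power_mult[symmetric] mult.commute)
  qed
qed

text \<open>For a root \<open>\<mu>\<close> inside the unit disc the decay propagates forward from \<open>w 0\<close>;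
  outside it, \<open>w\<close> is recovered backwards from its vanishing limit as a convergent tail sum.\<close>

lemma geometric_decay_first_order_stable:
  fixes w :: "nat \<Rightarrow> complex"
  assumes decay: "geometric_decay (\<lambda>m. w (Suc m) - \<mu> * w m)" and \<mu>: "norm \<mu> < 1"
  shows "geometric_decay w"
proof -
  obtain C \<rho> where C: "0 \<le> C" and \<rho>: "0 \<le> \<rho>" "\<rho> < 1"
    and bound: "\<And>n. norm (w (Suc n) - \<mu> * w n) \<le> C * \<rho> ^ n"
    using geometric_decayE[OF decay] by blast
  define \<rho>' where "\<rho>' = max \<rho> ((1 + norm \<mu>) / 2)"
  have \<rho>': "\<rho>' < 1" "\<rho> \<le> \<rho>'" "norm \<mu> < \<rho>'" "0 \<le> \<rho>'"
    unfolding \<rho>'_def using \<mu> \<rho> by (auto simp: max_def)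
  define K where "K = max (norm (w 0)) (C / (\<rho>' - norm \<mu>))"
  have "C / (\<rho>' - norm \<mu>) \<le> K" by (simp add: K_def)
  hence K: "C \<le> K * (\<rho>' - norm \<mu>)" using \<rho>' by (simp add: field_simps)
  have "norm (w n) \<le> K * \<rho>' ^ n" for n
  proof (induction n)
    case 0 thus ?case by (simp add: K_def)
  next
    case (Suc n)
    have "norm (w (Suc n)) \<le> norm (\<mu> * w n) + norm (w (Suc n) - \<mu> * w n)"
      by (metis add.commute diff_add_cancel norm_triangle_ineq)
    also have "\<dots> \<le> norm \<mu> * (K * \<rho>' ^ n) + C * \<rho>' ^ n"
    proof (rule add_mono)
      show "norm (\<mu> * w n) \<le> norm \<mu> * (K * \<rho>' ^ n)"
        unfolding norm_mult by (rule mult_left_mono[OF Suc.IH norm_ge_zero])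
      have "C * \<rho> ^ n \<le> C * \<rho>' ^ n"
        using C \<rho> \<rho>' by (intro mult_left_mono power_mono) auto
      with bound[of n] show "norm (w (Suc n) - \<mu> * w n) \<le> C * \<rho>' ^ n" by linarith
    qed
    also have "\<dots> \<le> norm \<mu> * (K * \<rho>' ^ n) + K * (\<rho>' - norm \<mu>) * \<rho>' ^ n"
      using K \<rho>' by (intro add_left_mono mult_right_mono) auto
    also have "\<dots> = K * \<rho>' ^ Suc n" by (simp add: algebra_simps)
    finally show ?case .
  qed
  thus ?thesis unfolding geometric_decay_def using \<rho>' by blast
qed

lemma geometric_decay_first_order_unstable:
  fixes w :: "nat \<Rightarrow> complex"
  assumes decay: "geometric_decay (\<lambda>m. w (Suc m) - \<mu> * w m)" and \<mu>: "1 \<le> norm \<mu>"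
    and lim: "w \<longlonglongrightarrow> 0"
  shows "geometric_decay w"
proof -
  obtain C \<rho> where C: "0 \<le> C" and \<rho>: "0 \<le> \<rho>" "\<rho> < 1"
    and bound: "\<And>n. norm (w (Suc n) - \<mu> * w n) \<le> C * \<rho> ^ n"
    using geometric_decayE[OF decay] by blast
  have back_step: "norm (w n) \<le> norm (w (Suc n)) + C * \<rho> ^ n" for n
  proof -
    have "\<mu> * w n = w (Suc n) - (w (Suc n) - \<mu> * w n)" by simp
    hence "norm \<mu> * norm (w n) \<le> norm (w (Suc n)) + norm (w (Suc n) - \<mu> * w n)"
      by (metis norm_mult norm_triangle_ineq4)
    moreover have "norm (w n) \<le> norm \<mu> * norm (w n)"
      using \<mu> mult_right_mono[OF \<mu> norm_ge_zero] by simp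
    ultimately show ?thesis using bound[of n] by linarith
  qed
  have tail: "norm (w n) \<le> norm (w (n + K)) + C * \<rho> ^ n / (1 - \<rho>)" for n K
  proof -
    have "norm (w n) \<le> norm (w (n + K)) + (\<Sum>i<K. C * \<rho> ^ (n + i))"
    proof (induction K)
      case (Suc K)
      with back_step[of "n + K"] show ?case by simp
    qed simp
    also have "(\<Sum>i<K. C * \<rho> ^ (n + i)) = C * \<rho> ^ n * (\<Sum>i<K. \<rho> ^ i)"
      by (simp add: power_add sum_distrib_left algebra_simps)
    also have "\<dots> \<le> C * \<rho> ^ n * (1 / (1 - \<rho>))"
      using C \<rho> by (intro mult_left_mono) (simp_all add: sum_gp_strict field_simps mult_left_le_one_le)
    finally show ?thesis by simp
  qed
  have "norm (w n) \<le> (C / (1 - \<rho>)) * \<rho> ^ n" for n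
  proof (rule ccontr)
    assume "\<not> ?thesis"
    hence gap: "0 < norm (w n) - C * \<rho> ^ n / (1 - \<rho>)" by simp
    have "(\<lambda>K. w (K + n)) \<longlonglongrightarrow> 0" using lim by (rule LIMSEQ_ignore_initial_segment)
    then obtain K where "norm (w (K + n)) < norm (w n) - C * \<rho> ^ n / (1 - \<rho>)"
      using gap by (metis LIMSEQ_D diff_zero le_refl)
    with tail[of n K] show False by (simp add: add.commute)
  qed
  thus ?thesis unfolding geometric_decay_def using \<rho> by blast
qed

lemma geometric_decay_recurrence:
  assumes "P \<noteq> 0" "\<And>n. recurrence_op P w n = x n" "geometric_decay x" "w \<longlonglongrightarrow> 0"
  shows "geometric_decay w"
  using assms
proof (induction "degree P" arbitrary: P w x)
  case 0
  then obtain c where P: "P = [:c:]" by (metis degree_eq_zeroE)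
  with 0 have c: "c \<noteq> 0" by auto
  obtain C \<rho> where "0 \<le> \<rho>" "\<rho> < 1" "\<And>n. norm (x n) \<le> C * \<rho> ^ n"
    using 0(4) unfolding geometric_decay_def by blast
  moreover have "w n = x n / c" for n using 0(3)[of n] c by (simp add: recurrence_op_def P field_simps)
  ultimately have "norm (w n) \<le> (C / norm c) * \<rho> ^ n" for n
    using c by (simp add: norm_divide divide_right_mono)
  thus ?case unfolding geometric_decay_def using \<open>0 \<le> \<rho>\<close> \<open>\<rho> < 1\<close> by blast
next
  case (Suc d)
  have "\<not> constant (poly P)" using Suc(2) by (simp add: constant_degree)
  then obtain \<mu> where "poly P \<mu> = 0" using fundamental_theorem_of_algebra by blast
  then obtain R where P: "P = [:-\<mu>, 1:] * R" by (metis dvdE poly_eq_0_iff_dvd)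
  have R: "R \<noteq> 0" using Suc(3) P by auto
  have deg: "d = degree R" using Suc(2) P degree_mult_eq[of "[:-\<mu>, 1:]" R] R by simp
  have rec: "recurrence_op R (\<lambda>m. w (Suc m) - \<mu> * w m) n = x n" for n
    using Suc(4)[of n] recurrence_op_linear_factor[OF R, of \<mu> w n] P by simp
  have "(\<lambda>m. w (Suc m) - \<mu> * w m) \<longlonglongrightarrow> 0"
    using tendsto_diff[OF LIMSEQ_Suc[OF Suc(6)] tendsto_mult[OF tendsto_const Suc(6)]] by simp
  with Suc(1)[OF deg R rec Suc(5)] have decay: "geometric_decay (\<lambda>m. w (Suc m) - \<mu> * w m)" .
  show ?case
  proof (cases "norm \<mu> < 1")
    case True
    with decay show ?thesis by (rule geometric_decay_first_order_stable)
  next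
    case False
    then show ?thesis by (intro geometric_decay_first_order_unstable[OF decay _ Suc(6)]) simp
  qed
qed

lemma sum_int_interval_reindex:
  fixes f :: "int \<Rightarrow> real"
  shows "(\<Sum>l = - int r..int p. f l) = (\<Sum>i\<le>r + p. f (int i - int r))"
  by (rule sum.reindex_bij_witness[where j="\<lambda>l. nat (l + int r)" and i="\<lambda>i. int i - int r"]) auto

lemma geometric_decay_stencil_recurrence:
  fixes A :: "int \<Rightarrow> real" and y z :: "nat \<Rightarrow> real"
  assumes A_last: "A (int p) \<noteq> 0"
    and rec: "\<And>j. (\<Sum>l = - int r..int p. A l * y (nat (int j + l + int r))) = z j"
    and z: "geometric_decay z" and y: "y \<longlonglongrightarrow> 0"
  shows "geometric_decay y"
proof -
  define P where "P = Poly (map (\<lambda>i. complex_of_real (A (int i - int r))) [0..<r+p+1])"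
  have coeff_P: "coeff P i = (if i \<le> r + p then complex_of_real (A (int i - int r)) else 0)" for i
    by (auto simp: P_def nth_default_def simp del: upt_Suc)
  have P: "P \<noteq> 0"
    using A_last coeff_P[of "r + p"] by auto
  have rec_P: "recurrence_op P (\<lambda>n. complex_of_real (y n)) n = complex_of_real (z n)" for n
  proof -
    have "degree P \<le> r + p" by (rule degree_le) (simp add: coeff_P)
    hence "recurrence_op P (\<lambda>n. complex_of_real (y n)) n
        = complex_of_real (\<Sum>i\<le>r + p. A (int i - int r) * y (n + i))"
      by (simp add: recurrence_op_degree_le coeff_P)
    also have "(\<Sum>i\<le>r + p. A (int i - int r) * y (n + i))
        = (\<Sum>l = - int r..int p. A l * y (nat (int n + l + int r)))"
      by (subst sum_int_interval_reindex) (auto intro!: sum.cong simp: nat_add_distrib)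
    finally show ?thesis using rec[of n] by simp
  qed
  have "(\<lambda>n. complex_of_real (y n)) \<longlonglongrightarrow> 0"
    using tendsto_of_real[OF y] by simp
  with z have "geometric_decay (\<lambda>n. complex_of_real (y n))"
    unfolding geometric_decay_of_real_iff[symmetric] by (rule geometric_decay_recurrence[OF P rec_P])
  thus ?thesis by (simp add: geometric_decay_of_real_iff)
qed

lemma abs_le_of_derivative_bound:
  fixes G g :: "real \<Rightarrow> real"
  assumes deriv: "\<And>x. x \<in> {s..s+H} \<Longrightarrow> (G has_real_derivative g x) (at x within {s..s+H})"
    and start: "G s = 0" and bound: "\<And>x. x \<in> {s..s+H} \<Longrightarrow> \<bar>g x\<bar> \<le> I"
    and x: "x \<in> {s..s+H}"
  shows "\<bar>G x\<bar> \<le> H * I"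
proof -
  have s: "s \<in> {s..s+H}" using x by auto
  have "norm (G x - G s) \<le> I * norm (x - s)"
    by (rule field_differentiable_bound[OF convex_real_interval(5) deriv]) (use bound x s in auto)
  also have "\<dots> \<le> I * H" using x bound[OF x] by (intro mult_left_mono) auto
  finally show ?thesis using start by (simp add: mult.commute)
qed

lemma abs_le_of_second_derivative_bound:
  fixes G g h :: "real \<Rightarrow> real"
  assumes "\<And>x. x \<in> {s..s+H} \<Longrightarrow> (G has_real_derivative g x) (at x within {s..s+H})"
    and "\<And>x. x \<in> {s..s+H} \<Longrightarrow> (g has_real_derivative h x) (at x within {s..s+H})"
    and "G s = 0" "g s = 0" "\<And>x. x \<in> {s..s+H} \<Longrightarrow> \<bar>h x\<bar> \<le> I"
    and "x \<in> {s..s+H}"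
  shows "\<bar>G x\<bar> \<le> H\<^sup>2 * I"
  using abs_le_of_derivative_bound[OF assms(1,3) abs_le_of_derivative_bound[OF assms(2,4,5)] assms(6)]
  by (simp add: power2_eq_square algebra_simps)

text \<open>A functional bounded by the supremum norm on a window \<open>{s..s+H}\<close> which annihilates
  polynomials of degree at most two (resp. one) only sees the Taylor remainder at \<open>s\<close>.\<close>

lemma functional_bound_Taylor2:
  fixes L :: "(real \<Rightarrow> real) \<Rightarrow> real" and F U V :: "real \<Rightarrow> real"
  assumes annihil: "\<And>f c0 c1 c2. L (\<lambda>x. f x - (c0 + c1 * (x - s) + c2 * (x - s)\<^sup>2)) = L f"
    and bounded: "\<And>f B. (\<And>x. x \<in> {s..s+H} \<Longrightarrow> \<bar>f x\<bar> \<le> B) \<Longrightarrow> \<bar>L f\<bar> \<le> M * B"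
    and F: "\<And>x. x \<in> {s..s+H} \<Longrightarrow> (F has_real_derivative U x) (at x within {s..s+H})"
    and U: "\<And>x. x \<in> {s..s+H} \<Longrightarrow> (U has_real_derivative V x) (at x within {s..s+H})"
    and V: "\<And>x. x \<in> {s..s+H} \<Longrightarrow> \<bar>V x - V s\<bar> \<le> I"
  shows "\<bar>L F\<bar> \<le> M * (H\<^sup>2 * I)"
proof -
  define G where "G x = F x - (F s + U s * (x - s) + (V s / 2) * (x - s)\<^sup>2)" for x
  define g where "g x = U x - (U s + V s * (x - s))" for x
  have "(G has_real_derivative g x) (at x within {s..s+H})" if "x \<in> {s..s+H}" for x
    unfolding G_def g_def by (rule derivative_eq_intros F[OF that] refl | simp)+
  moreover have "(g has_real_derivative (V x - V s)) (at x within {s..s+H})" if "x \<in> {s..s+H}" for x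
    unfolding g_def by (rule derivative_eq_intros U[OF that] refl | simp)+
  ultimately have "\<bar>G x\<bar> \<le> H\<^sup>2 * I" if "x \<in> {s..s+H}" for x
    by (rule abs_le_of_second_derivative_bound[OF _ _ _ _ V that]) (simp_all add: G_def g_def)
  hence "\<bar>L G\<bar> \<le> M * (H\<^sup>2 * I)" by (rule bounded)
  moreover have "L G = L F" unfolding G_def by (rule annihil)
  ultimately show ?thesis by simp
qed

lemma functional_bound_Taylor1:
  fixes L :: "(real \<Rightarrow> real) \<Rightarrow> real" and F U :: "real \<Rightarrow> real"
  assumes annihil: "\<And>f c0 c1. L (\<lambda>x. f x - (c0 + c1 * (x - s))) = L f"
    and bounded: "\<And>f B. (\<And>x. x \<in> {s..s+H} \<Longrightarrow> \<bar>f x\<bar> \<le> B) \<Longrightarrow> \<bar>L f\<bar> \<le> M * B"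
    and F: "\<And>x. x \<in> {s..s+H} \<Longrightarrow> (F has_real_derivative U x) (at x within {s..s+H})"
    and U: "\<And>x. x \<in> {s..s+H} \<Longrightarrow> \<bar>U x - U s\<bar> \<le> I"
  shows "\<bar>L F\<bar> \<le> M * (H * I)"
proof -
  define G where "G x = F x - (F s + U s * (x - s))" for x
  have "(G has_real_derivative (U x - U s)) (at x within {s..s+H})" if "x \<in> {s..s+H}" for x
    unfolding G_def by (rule derivative_eq_intros F[OF that] refl | simp)+
  hence "\<bar>G x\<bar> \<le> H * I" if "x \<in> {s..s+H}" for x
    by (rule abs_le_of_derivative_bound[OF _ _ U that]) (simp_all add: G_def)
  hence "\<bar>L G\<bar> \<le> M * (H * I)" by (rule bounded)
  moreover have "L G = L F" unfolding G_def by (rule annihil)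
  ultimately show ?thesis by simp
qed

lemma sum_shift_difference:
  fixes \<Gamma> :: "nat \<Rightarrow> 'a::ab_group_add"
  shows "(\<Sum>i<N. \<Gamma> (i + K) - \<Gamma> i) = (\<Sum>t<K. \<Gamma> (N + t) - \<Gamma> t)"
proof (induction N)
  case (Suc N)
  have "(\<Sum>t<K. \<Gamma> (Suc N + t) - \<Gamma> t)
      = (\<Sum>t<K. \<Gamma> (N + t) - \<Gamma> t) + (\<Sum>t<K. \<Gamma> (Suc (N + t)) - \<Gamma> (N + t))"
    by (simp add: sum.distrib[symmetric])
  also have "(\<Sum>t<K. \<Gamma> (Suc (N + t)) - \<Gamma> (N + t)) = \<Gamma> (N + K) - \<Gamma> N"
    using sum_lessThan_telescope[where f="\<lambda>t. \<Gamma> (N + t)" and m=K] by simp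
  finally show ?case using Suc by (simp add: add.commute)
qed simp

text \<open>Windows of length \<open>Q h\<close> placed at the steps of a grid of mesh \<open>h\<close> cover each point
  at most \<open>\<lceil>Q\<rceil>\<close> times.\<close>

lemma sum_integral_overlapping_windows:
  fixes f :: "real \<Rightarrow> real"
  assumes nonneg: "\<And>x. 0 \<le> f x" and integrable: "\<And>b. f integrable_on {s0..b}"
    and total: "\<And>b. integral {s0..b} f \<le> L" and h: "0 < h" and Q: "0 \<le> Q"
  shows "(\<Sum>i<N. integral {s0 + real i * h .. s0 + real i * h + Q * h} f) \<le> real (nat \<lceil>Q\<rceil>) * L"
proof -
  define K where "K = nat \<lceil>Q\<rceil>"
  define \<Gamma> where "\<Gamma> i = integral {s0 .. s0 + real i * h} f" for i
  have \<Gamma>_nonneg: "0 \<le> \<Gamma> i" for i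
    unfolding \<Gamma>_def by (rule integral_nonneg[OF integrable]) (use nonneg in auto)
  have window: "integral {s0 + real i * h .. s0 + real i * h + Q * h} f \<le> \<Gamma> (i + K) - \<Gamma> i" for i
  proof -
    let ?a = "s0 + real i * h" and ?b = "s0 + real i * h + Q * h" and ?c = "s0 + real (i + K) * h"
    have "Q \<le> real K" unfolding K_def by linarith
    hence order: "s0 \<le> ?a" "?a \<le> ?b" "?b \<le> ?c" using Q h by (simp_all add: algebra_simps)
    have sub: "f integrable_on {u..v}" if "s0 \<le> u" "v \<le> ?c" for u v
      by (rule integrable_on_subinterval[OF integrable[of ?c]]) (use that in auto)
    have "integral {?a..?c} f = integral {?a..?b} f + integral {?b..?c} f"
      by (rule Henstock_Kurzweil_Integration.integral_combine[symmetric])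
        (use order sub[of ?a ?c] in auto)
    moreover have "0 \<le> integral {?b..?c} f"
      by (rule integral_nonneg[OF sub]) (use order nonneg in auto)
    moreover have "integral {s0..?c} f = integral {s0..?a} f + integral {?a..?c} f"
      by (rule Henstock_Kurzweil_Integration.integral_combine[symmetric])
        (use order integrable in auto)
    ultimately show ?thesis unfolding \<Gamma>_def by simp
  qed
  have "(\<Sum>i<N. integral {s0 + real i * h .. s0 + real i * h + Q * h} f) \<le> (\<Sum>i<N. \<Gamma> (i + K) - \<Gamma> i)"
    by (rule sum_mono[OF window])
  also have "\<dots> = (\<Sum>t<K. \<Gamma> (N + t) - \<Gamma> t)" by (rule sum_shift_difference)
  also have "\<dots> \<le> (\<Sum>t<K. L)"
  proof (rule sum_mono)
    fix t
    show "\<Gamma> (N + t) - \<Gamma> t \<le> L"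
      using \<Gamma>_nonneg[of t] total[of "s0 + real (N + t) * h"] unfolding \<Gamma>_def by linarith
  qed
  finally show ?thesis by (simp add: K_def)
qed

lemma integral_abs_square_le:
  fixes f :: "real \<Rightarrow> real"
  assumes "(\<lambda>x. \<bar>f x\<bar>) integrable_on {a..b}" and "(\<lambda>x. (f x)\<^sup>2) integrable_on {a..b}" and "a \<le> b"
  shows "(integral {a..b} (\<lambda>x. \<bar>f x\<bar>))\<^sup>2 \<le> (b - a) * integral {a..b} (\<lambda>x. (f x)\<^sup>2)"
proof (cases "a = b")
  case False
  hence ab: "0 < b - a" using assms(3) by simp
  define J where "J = integral {a..b} (\<lambda>x. \<bar>f x\<bar>)"
  define t where "t = J / (b - a)"
  have expand: "(\<lambda>x. (\<bar>f x\<bar> - t)\<^sup>2) = (\<lambda>x. ((f x)\<^sup>2 - (2 * t) * \<bar>f x\<bar>) + t\<^sup>2)"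
    by (auto simp: power2_eq_square algebra_simps fun_eq_iff)
  have scaled: "(\<lambda>x. (2 * t) * \<bar>f x\<bar>) integrable_on {a..b}"
    using integrable_on_cmult_left[OF assms(1), of "2 * t"] by simp
  \<comment> \<open>expand \<open>0 \<le> \<integral> (\<bar>f\<bar> - t)\<^sup>2\<close> with \<open>t\<close> the mean of \<open>\<bar>f\<bar>\<close>\<close>
  have "0 \<le> integral {a..b} (\<lambda>x. (\<bar>f x\<bar> - t)\<^sup>2)"
    by (rule integral_nonneg) (auto simp: expand intro!: integrable_add integrable_diff assms(2) scaled)
  also have "\<dots> = integral {a..b} (\<lambda>x. (f x)\<^sup>2) - 2 * t * J + t\<^sup>2 * (b - a)"
    unfolding expand J_def using assms(3)
    by (subst integral_add, (intro integrable_diff assms(2) scaled integrable_const_ivl)+)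
       (subst integral_diff, (intro assms(2) scaled)+, simp)
  also have "2 * t * J - t\<^sup>2 * (b - a) = J\<^sup>2 / (b - a)"
  proof -
    have "t\<^sup>2 * (b - a) = t * J" using ab by (simp add: t_def power2_eq_square)
    thus ?thesis by (simp add: t_def power2_eq_square)
  qed
  ultimately have "J\<^sup>2 / (b - a) \<le> integral {a..b} (\<lambda>x. (f x)\<^sup>2)" by simp
  thus ?thesis using ab unfolding J_def by (simp add: divide_le_eq mult.commute)
qed simp

lemma abs_weighted_sum_le:
  fixes wgt X :: "'i \<Rightarrow> real"
  assumes "\<And>i. i \<in> S \<Longrightarrow> \<bar>X i\<bar> \<le> M"
  shows "\<bar>\<Sum>i\<in>S. wgt i * X i\<bar> \<le> (\<Sum>i\<in>S. \<bar>wgt i\<bar>) * M"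
proof (cases "finite S")
  case True
  have "\<bar>\<Sum>i\<in>S. wgt i * X i\<bar> \<le> (\<Sum>i\<in>S. \<bar>wgt i\<bar> * M)"
    by (rule order_trans[OF sum_abs sum_mono]) (simp add: abs_mult assms mult_left_mono)
  thus ?thesis by (simp add: sum_distrib_right)
qed simp

lemma abs_scaled_combination_le:
  fixes X Y :: real
  assumes "0 \<le> t" "0 \<le> b" "\<bar>X\<bar> \<le> P" "\<bar>Y\<bar> \<le> Q"
  shows "\<bar>t * (X + b * Y)\<bar> \<le> t * (P + b * Q)" and "\<bar>t * (X - b * Y)\<bar> \<le> t * (P + b * Q)"
proof -
  have "b * \<bar>Y\<bar> \<le> b * Q" using assms by (intro mult_left_mono) auto
  hence "\<bar>X + b * Y\<bar> \<le> P + b * Q" "\<bar>X - b * Y\<bar> \<le> P + b * Q"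
    using assms abs_triangle_ineq[of X "b * Y"] abs_triangle_ineq4[of X "b * Y"] by (auto simp: abs_mult)
  thus "\<bar>t * (X + b * Y)\<bar> \<le> t * (P + b * Q)" "\<bar>t * (X - b * Y)\<bar> \<le> t * (P + b * Q)"
    using assms(1) by (auto simp: abs_mult intro: mult_left_mono)
qed

lemma square_le_of_abs_le:
  fixes X K J G :: real
  assumes "\<bar>X\<bar> \<le> K * J" "0 \<le> J" "J\<^sup>2 \<le> G"
  shows "X\<^sup>2 \<le> K\<^sup>2 * G"
proof -
  have "X\<^sup>2 \<le> (K * J)\<^sup>2" using assms(1) abs_le_square_iff abs_ge_zero order_trans by (metis abs_of_nonneg)
  also have "\<dots> = K\<^sup>2 * J\<^sup>2" by (simp add: power_mult_distrib)
  also have "\<dots> \<le> K\<^sup>2 * G" by (rule mult_left_mono[OF assms(3)]) simp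
  finally show ?thesis .
qed

lemma square_sum3_le: "(x + y + z)\<^sup>2 \<le> 3 * (x\<^sup>2 + y\<^sup>2 + (z::real)\<^sup>2)"
proof -
  have "3 * (x\<^sup>2 + y\<^sup>2 + z\<^sup>2) - (x + y + z)\<^sup>2 = (x - y)\<^sup>2 + (y - z)\<^sup>2 + (x - z)\<^sup>2"
    by (simp add: power2_eq_square algebra_simps)
  moreover have "0 \<le> (x - y)\<^sup>2 + (y - z)\<^sup>2 + (x - z)\<^sup>2" by simp
  ultimately show ?thesis by linarith
qed

lemma summable_suminf_le_of_sums:
  fixes f g :: "nat \<Rightarrow> real"
  assumes "\<And>i. 0 \<le> f i" "\<And>i. f i \<le> g i" "g sums S"
  shows "summable f \<and> suminf f \<le> S"
proof
  show f: "summable f"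
    by (rule summable_comparison_test'[OF sums_summable[OF assms(3)]]) (use assms in simp)
  show "suminf f \<le> S"
    using suminf_le[OF assms(2) f sums_summable[OF assms(3)]] sums_unique[OF assms(3)] by simp
qed

section \<open>Square integrable functions on the half-line\<close>

lemma L2_Rplus_set_integrable:
  assumes L: "L2_Rplus f" and a: "0 \<le> a"
  shows "set_integrable lborel {a..b} f" "set_integrable lborel {a..b} (\<lambda>x. (f x)\<^sup>2)"
    "(LINT x:{a..b}|lborel. (f x)\<^sup>2) \<le> L2sq f"
proof -
  have meas: "set_borel_measurable lborel {0..} f" and sq: "set_integrable lborel {0..} (\<lambda>x. (f x)\<^sup>2)"
    using L by (auto simp: L2_Rplus_def)
  have sub: "{a..b} \<subseteq> {0..}" using a by auto
  show sq_ab: "set_integrable lborel {a..b} (\<lambda>x. (f x)\<^sup>2)"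
    by (rule set_integrable_subset[OF sq _ sub]) simp
  have meas_ab: "set_borel_measurable lborel {a..b} f"
  proof -
    have "(\<lambda>x. indicator {a..b} x *\<^sub>R f x) = (\<lambda>x. indicator {a..b} x * (indicator {0..} x *\<^sub>R f x))"
      using sub by (auto simp: indicator_def fun_eq_iff)
    moreover have "(\<lambda>x. indicator {a..b} x * (indicator {0..} x *\<^sub>R f x)) \<in> borel_measurable lborel"
      using meas unfolding set_borel_measurable_def by measurable
    ultimately show ?thesis unfolding set_borel_measurable_def by simp
  qed
  have "set_integrable lborel {a..b} (\<lambda>x. 1 + (f x)\<^sup>2)"
    by (rule set_integral_add[OF _ sq_ab])
      (unfold set_integrable_def, rule borel_integrable_compact, auto)
  \<comment> \<open>on a bounded interval, \<open>\<bar>f\<bar> \<le> 1 + f\<^sup>2\<close> gives local integrability\<close>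
  then show "set_integrable lborel {a..b} f"
  proof (rule set_integrable_bound[OF _ meas_ab])
    show "AE x in lborel. x \<in> {a..b} \<longrightarrow> norm (f x) \<le> norm (1 + (f x)\<^sup>2)"
    proof (intro AE_I2 impI)
      fix x
      have "0 \<le> (\<bar>f x\<bar> - 1)\<^sup>2" by simp
      thus "norm (f x) \<le> norm (1 + (f x)\<^sup>2)" by (simp add: power2_eq_square algebra_simps)
    qed
  qed
  show "(LINT x:{a..b}|lborel. (f x)\<^sup>2) \<le> L2sq f"
    unfolding L2sq_def set_lebesgue_integral_def
    by (rule integral_mono) (use sq_ab sq sub in \<open>auto simp: set_integrable_def indicator_def\<close>)
qed

lemma L2_Rplus_integrable_on:
  assumes L: "L2_Rplus f" and a: "0 \<le> a"
  shows "f integrable_on {a..b}" "(\<lambda>x. \<bar>f x\<bar>) integrable_on {a..b}"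
    "(\<lambda>x. (f x)\<^sup>2) integrable_on {a..b}"
    "integral {a..b} (\<lambda>x. (f x)\<^sup>2) \<le> L2sq f"
    "(LINT x:{a..b}|lborel. f x) = integral {a..b} f"
  using L2_Rplus_set_integrable[OF L a, of b]
    set_borel_integral_eq_integral[OF set_integrable_abs[OF L2_Rplus_set_integrable(1)[OF L a]]]
    set_borel_integral_eq_integral[of "{a..b}" f]
    set_borel_integral_eq_integral[of "{a..b}" "\<lambda>x. (f x)\<^sup>2"]
  by auto

lemma L2sq_nonneg: "L2_Rplus f \<Longrightarrow> 0 \<le> L2sq f"
  using L2_Rplus_integrable_on(4)[of f 0 0] by simp

lemma integral_abs_nonneg: "L2_Rplus g \<Longrightarrow> 0 \<le> s \<Longrightarrow> 0 \<le> integral {s..t} (\<lambda>x. \<bar>g x\<bar>)"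
  by (rule integral_nonneg[OF L2_Rplus_integrable_on(2)]) auto

lemma integral_abs_square_le_L2sq:
  assumes "L2_Rplus g" "0 \<le> s" "0 \<le> H"
  shows "(integral {s..s+H} (\<lambda>x. \<bar>g x\<bar>))\<^sup>2 \<le> H * integral {s..s+H} (\<lambda>x. (g x)\<^sup>2)"
    and "(integral {s..s+H} (\<lambda>x. \<bar>g x\<bar>))\<^sup>2 \<le> H * L2sq g"
proof -
  show "(integral {s..s+H} (\<lambda>x. \<bar>g x\<bar>))\<^sup>2 \<le> H * integral {s..s+H} (\<lambda>x. (g x)\<^sup>2)"
    using integral_abs_square_le[OF L2_Rplus_integrable_on(2,3)[OF assms(1,2)], of "s+H"] assms(3) by simp
  also have "\<dots> \<le> H * L2sq g"
    by (rule mult_left_mono[OF L2_Rplus_integrable_on(4)[OF assms(1,2)] assms(3)])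
  finally show "(integral {s..s+H} (\<lambda>x. \<bar>g x\<bar>))\<^sup>2 \<le> H * L2sq g" .
qed

lemma oscillation_le_integral_abs:
  assumes L: "L2_Rplus g" and f: "\<And>x. 0 \<le> x \<Longrightarrow> f x = f 0 + integral {0..x} g"
    and s: "0 \<le> s" and x: "x \<in> {s..s+H}"
  shows "\<bar>f x - f s\<bar> \<le> integral {s..s+H} (\<lambda>t. \<bar>g t\<bar>)"
proof -
  have "integral {0..s} g + integral {s..x} g = integral {0..x} g"
    by (rule Henstock_Kurzweil_Integration.integral_combine)
      (use s x L2_Rplus_integrable_on(1)[OF L] in auto)
  hence "f x - f s = integral {s..x} g" using f[of s] f[of x] s x by simp
  also have "\<bar>\<dots>\<bar> \<le> integral {s..x} (\<lambda>t. \<bar>g t\<bar>)"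
    using integral_norm_bound_integral[OF L2_Rplus_integrable_on(1,2)[OF L s, of x]] by simp
  also have "\<dots> \<le> integral {s..s+H} (\<lambda>t. \<bar>g t\<bar>)"
    by (rule integral_subset_le) (use x s L2_Rplus_integrable_on(2)[OF L s] in auto)
  finally show ?thesis .
qed

lemma summable_window_integrals:
  assumes L: "L2_Rplus g" and s0: "0 \<le> s0" and h: "0 < h" and Q: "0 \<le> Q"
  defines "W i \<equiv> integral {s0 + real i * h .. s0 + real i * h + Q * h} (\<lambda>t. (g t)\<^sup>2)"
  shows "summable W" "(\<Sum>i. W i) \<le> real (nat \<lceil>Q\<rceil>) * L2sq g"
proof -
  have nonneg: "0 \<le> W i" for i
    unfolding W_def by (rule integral_nonneg[OF L2_Rplus_integrable_on(3)[OF L]]) (use s0 h in auto)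
  have partial: "(\<Sum>i<N. W i) \<le> real (nat \<lceil>Q\<rceil>) * L2sq g" for N
    unfolding W_def
    by (rule sum_integral_overlapping_windows[OF _ L2_Rplus_integrable_on(3,4)[OF L s0] h Q]) simp
  show "summable W" by (rule summableI_nonneg_bounded[OF nonneg partial])
  then show "(\<Sum>i. W i) \<le> real (nat \<lceil>Q\<rceil>) * L2sq g" by (rule suminf_le_const[OF _ partial])
qed

locale H2_halfline =
  fixes u0 u1 u2 :: "real \<Rightarrow> real"
  assumes H2: "H2_Rplus u0 u1 u2" and u0_zero: "u0 0 = 0"
begin

lemma L2_u1: "L2_Rplus u1" and L2_u2: "L2_Rplus u2"
  using H2 by (auto simp: H2_Rplus_def)

lemma u1_eq_integral: "0 \<le> x \<Longrightarrow> u1 x = u1 0 + integral {0..x} u2"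
  using H2 unfolding H2_Rplus_def L2_Rplus_integrable_on(5)[OF L2_u2 order_refl] by blast

lemma u0_eq_integral: "0 \<le> x \<Longrightarrow> u0 x = integral {0..x} u1"
  using H2 u0_zero unfolding H2_Rplus_def L2_Rplus_integrable_on(5)[OF L2_u1 order_refl] by simp

lemma continuous_on_u1: "continuous_on {0..b} u1"
proof -
  have "continuous_on {0..b} (\<lambda>x. u1 0 + integral {0..x} u2)"
    by (intro continuous_intros indefinite_integral_continuous_1 L2_Rplus_integrable_on(1)[OF L2_u2]) simp
  thus ?thesis by (rule continuous_on_eq) (auto intro: u1_eq_integral[symmetric])
qed

lemma continuous_on_u0: "continuous_on {0..b} u0"
proof -
  have "continuous_on {0..b} (\<lambda>x. integral {0..x} u1)"
    by (intro indefinite_integral_continuous_1 L2_Rplus_integrable_on(1)[OF L2_u1]) simp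
  thus ?thesis by (rule continuous_on_eq) (auto simp: u0_eq_integral)
qed

lemma u0_has_derivative:
  assumes "x \<in> S" "S \<subseteq> {0..b}"
  shows "(u0 has_real_derivative u1 x) (at x within S)"
proof (rule DERIV_subset[OF _ assms(2)])
  have "((\<lambda>y. integral {0..y} u1) has_real_derivative u1 x) (at x within {0..b})"
    unfolding has_real_derivative_iff_has_vector_derivative
    by (rule integral_has_vector_derivative[OF continuous_on_u1]) (use assms in auto)
  then show "(u0 has_real_derivative u1 x) (at x within {0..b})"
    by (rule has_field_derivative_transform_within[where d=1]) (use assms in \<open>auto simp: u0_eq_integral\<close>)
qed

definition primitive :: "real \<Rightarrow> real" where "primitive y = integral {0..y} u0"

lemma primitive_has_derivative:
  assumes "x \<in> S" "S \<subseteq> {0..b}"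
  shows "(primitive has_real_derivative u0 x) (at x within S)"
proof (rule DERIV_subset[OF _ assms(2)])
  show "(primitive has_real_derivative u0 x) (at x within {0..b})"
    unfolding has_real_derivative_iff_has_vector_derivative primitive_def
    by (rule integral_has_vector_derivative[OF continuous_on_u0]) (use assms in auto)
qed

lemma integral_u0_shift:
  assumes "\<alpha> \<le> \<beta>" "0 \<le> \<alpha> + C"
  shows "(LINT x:{\<alpha>..\<beta>}|lborel. u0 (x + C)) = primitive (\<beta> + C) - primitive (\<alpha> + C)"
  unfolding set_lebesgue_integral_def
proof (rule integral_FTC_atLeastAtMost[OF assms(1)])
  show "continuous_on {\<alpha>..\<beta>} (\<lambda>x. u0 (x + C))"
    by (rule continuous_on_compose2[OF continuous_on_u0[of "\<beta> + C"]]) (use assms in \<open>auto intro!: continuous_intros\<close>)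
  fix x assume x: "\<alpha> \<le> x" "x \<le> \<beta>"
  have "(primitive has_real_derivative u0 (x + C)) (at (x + C) within ((\<lambda>x. x + C) ` {\<alpha>..\<beta>}))"
    by (rule primitive_has_derivative[where b="\<beta> + C"]) (use x assms in auto)
  moreover have "((\<lambda>x. x + C) has_real_derivative 1) (at x within {\<alpha>..\<beta>})"
    by (rule derivative_eq_intros refl | simp)+
  ultimately have "((primitive \<circ> (\<lambda>x. x + C)) has_real_derivative u0 (x + C) * 1) (at x within {\<alpha>..\<beta>})"
    by (rule DERIV_image_chain)
  then show "((\<lambda>x. primitive (x + C)) has_vector_derivative u0 (x + C)) (at x within {\<alpha>..\<beta>})"
    by (simp add: has_real_derivative_iff_has_vector_derivative o_def)
qed

lemma integral_u0_scale:
  assumes "\<alpha> \<le> \<beta>" "0 \<le> \<alpha>" "0 < c"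
  shows "(LINT t:{\<alpha>..\<beta>}|lborel. u0 (c * t)) = primitive (c * \<beta>) / c - primitive (c * \<alpha>) / c"
  unfolding set_lebesgue_integral_def
proof (rule integral_FTC_atLeastAtMost[OF assms(1)])
  show "continuous_on {\<alpha>..\<beta>} (\<lambda>x. u0 (c * x))"
    by (rule continuous_on_compose2[OF continuous_on_u0[of "c * \<beta>"]])
      (use assms in \<open>auto intro!: continuous_intros mult_left_mono\<close>)
  fix x assume x: "\<alpha> \<le> x" "x \<le> \<beta>"
  have "(primitive has_real_derivative u0 (c * x)) (at (c * x) within ((\<lambda>x. c * x) ` {\<alpha>..\<beta>}))"
    by (rule primitive_has_derivative[where b="c * \<beta>"]) (use x assms in \<open>auto intro: mult_left_mono\<close>)
  from DERIV_cdivide[OF DERIV_image_chain[OF this DERIV_cmult_Id], of c]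
  show "((\<lambda>x. primitive (c * x) / c) has_vector_derivative u0 (c * x)) (at x within {\<alpha>..\<beta>})"
    using assms by (simp add: has_real_derivative_iff_has_vector_derivative o_def)
qed

lemma u1_square_le: assumes "0 \<le> x" shows "(u1 x)\<^sup>2 \<le> 2 * (L2sq u1 + L2sq u2)"
proof -
  define A where "A = integral {x..x+1} (\<lambda>t. \<bar>u1 t\<bar>)"
  define B where "B = integral {x..x+1} (\<lambda>t. \<bar>u2 t\<bar>)"
  have "\<bar>u1 x\<bar> \<le> \<bar>u1 y\<bar> + B" if "y \<in> {x..x+1}" for y
    using oscillation_le_integral_abs[OF L2_u2 u1_eq_integral assms that] by (simp add: B_def)
  hence "integral {x..x+1} (\<lambda>y. \<bar>u1 x\<bar>) \<le> integral {x..x+1} (\<lambda>y. \<bar>u1 y\<bar> + B)"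
    by (intro integral_le) (use L2_Rplus_integrable_on(2)[OF L2_u1 assms] in \<open>auto intro!: integrable_add\<close>)
  also have "\<dots> = A + B"
    unfolding A_def using L2_Rplus_integrable_on(2)[OF L2_u1 assms, of "x+1"]
    by (subst integral_add) auto
  finally have u: "\<bar>u1 x\<bar> \<le> A + B" by simp
  have A: "A\<^sup>2 \<le> L2sq u1" "0 \<le> A"
    using integral_abs_square_le_L2sq(2)[OF L2_u1 assms, of 1] integral_abs_nonneg[OF L2_u1 assms]
    by (simp_all add: A_def)
  have B: "B\<^sup>2 \<le> L2sq u2" "0 \<le> B"
    using integral_abs_square_le_L2sq(2)[OF L2_u2 assms, of 1] integral_abs_nonneg[OF L2_u2 assms]
    by (simp_all add: B_def)
  have "(u1 x)\<^sup>2 = \<bar>u1 x\<bar>\<^sup>2" by simp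
  also have "\<dots> \<le> (A + B)\<^sup>2" by (rule power_mono[OF u]) simp
  also have "\<dots> \<le> 2 * A\<^sup>2 + 2 * B\<^sup>2"
    using sum_squares_bound[of A B] by (simp add: power2_eq_square algebra_simps)
  finally show ?thesis using A B by simp
qed

end

section \<open>The multistep scheme as functionals of the primitive of the data\<close>

locale multistep_scheme =
  fixes a lam :: real and r p k :: nat and A :: "int \<Rightarrow> real" and alpha beta :: "nat \<Rightarrow> real"
  assumes a_neg: "a < 0" and lam_pos: "lam > 0"
    and A_sum: "(\<Sum>l = - int r..int p. A l) = 0" and A_moment: "(\<Sum>l = - int r..int p. of_int l * A l) = a"
    and alpha_sum: "(\<Sum>\<sigma>\<le>k. alpha \<sigma>) = 0"
    and alpha_moment: "(\<Sum>\<sigma>\<le>k. real \<sigma> * alpha \<sigma>) = (\<Sum>\<sigma><k. beta \<sigma>)"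
begin

definition "c = - a"
definition "beta_sum = (\<Sum>\<sigma><k. beta \<sigma>)"
definition "alpha_norm = (\<Sum>\<sigma>\<le>k. \<bar>alpha \<sigma>\<bar>)"
definition "beta_norm = (\<Sum>\<sigma><k. \<bar>beta \<sigma>\<bar>)"
definition "A_norm = (\<Sum>l = - int r..int p. \<bar>A l\<bar>)"

lemma c_pos: "c > 0" using a_neg by (simp add: c_def)

lemma alpha_sum_affine: "(\<Sum>\<sigma>\<le>k. alpha \<sigma> * (X + Y * real \<sigma>)) = Y * beta_sum"
proof -
  have "(\<Sum>\<sigma>\<le>k. alpha \<sigma> * (X + Y * real \<sigma>))
      = X * (\<Sum>\<sigma>\<le>k. alpha \<sigma>) + Y * (\<Sum>\<sigma>\<le>k. real \<sigma> * alpha \<sigma>)"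
    by (simp add: algebra_simps sum.distrib sum_distrib_left)
  thus ?thesis by (simp add: alpha_sum alpha_moment beta_sum_def)
qed

lemma A_sum_affine: "(\<Sum>l = - int r..int p. A l * (X + Z * of_int l)) = Z * a"
proof -
  have "(\<Sum>l = - int r..int p. A l * (X + Z * of_int l))
      = X * (\<Sum>l = - int r..int p. A l) + Z * (\<Sum>l = - int r..int p. of_int l * A l)"
    by (simp add: algebra_simps sum.distrib sum_distrib_left)
  thus ?thesis by (simp add: A_sum A_moment)
qed

text \<open>Lengths of the space-time windows seen by the errors, in units of \<open>\<Delta>t\<close>, and the
  corresponding amplification constants (both independent of \<open>\<Delta>t\<close>).\<close>

definition "h_int = real (r + p + 1) / lam + c * real k"
definition "m_int = 2 * lam * (alpha_norm + lam * beta_norm * A_norm)"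
definition "h_tr = c * real (2 * k + 1)"
definition "m_w = (2 / c) * (alpha_norm + beta_norm * \<bar>inverse beta_sum\<bar> * alpha_norm)"
definition "m_wt = 2 * alpha_norm * alpha_norm * \<bar>inverse beta_sum\<bar> / (lam * c)"
definition "h_start = c * real (3 * k)"
definition "h_bdry = real r / lam + c"
definition "m_bdry = 2 * lam + 2 / c"

lemma window_consts_nonneg: "0 \<le> h_int" "0 \<le> h_tr" "0 \<le> h_start" "0 \<le> h_bdry"
  using c_pos lam_pos by (simp_all add: h_int_def h_tr_def h_start_def h_bdry_def)

end

locale boundary_layers = multistep_scheme +
  fixes w wt :: "nat \<Rightarrow> real"
  assumes A_last: "A (int p) \<noteq> 0"
    and w_init: "\<forall>j<r. w j = -1"
    and w_rec: "\<forall>j. (\<Sum>l = - int r..int p. A l * w (nat (int j + l + int r))) = 0"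
    and w_lim: "w \<longlonglongrightarrow> 0"
    and wt_rec: "\<forall>j\<ge>r. (\<Sum>l = - int r..int p. A l * wt (nat (int j + l))) + w j = 0"
    and wt_init: "\<forall>j<r. wt j = 0"
    and wt_lim: "wt \<longlonglongrightarrow> 0"
begin

lemma geometric_decay_w: "geometric_decay w"
  by (rule geometric_decay_stencil_recurrence[where A=A and p=p and r=r and y=w and z="\<lambda>_. 0",
        OF A_last _ geometric_decay_zero w_lim])
    (use w_rec in auto)

lemma geometric_decay_wt: "geometric_decay wt"
proof (rule geometric_decay_stencil_recurrence[where A=A and p=p and r=r and y=wt and z="\<lambda>j. -1 * w (j + r)",
      OF A_last _ _ wt_lim])
  show "(\<Sum>l = - int r..int p. A l * wt (nat (int j + l + int r))) = -1 * w (j + r)" for j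
    using wt_rec[rule_format, of "j + r"] by (simp add: algebra_simps eq_neg_iff_add_eq_0)
  show "geometric_decay (\<lambda>j. -1 * w (j + r))" by (rule geometric_decay_scale_shift[OF geometric_decay_w])
qed

definition "w_energy = (\<Sum>i. (w (i + r))\<^sup>2)"
definition "wt_energy = (\<Sum>i. (wt (i + r))\<^sup>2)"

lemma summable_w_square: "summable (\<lambda>i. (w (i + r))\<^sup>2)"
  using geometric_decay_summable_square[OF geometric_decay_scale_shift[OF geometric_decay_w, of 1 r]] by simp

lemma summable_wt_square: "summable (\<lambda>i. (wt (i + r))\<^sup>2)"
  using geometric_decay_summable_square[OF geometric_decay_scale_shift[OF geometric_decay_wt, of 1 r]] by simp

lemma energies_nonneg: "0 \<le> w_energy" "0 \<le> wt_energy"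
  unfolding w_energy_def wt_energy_def
  by (simp_all add: suminf_nonneg summable_w_square summable_wt_square)

end

locale multistep_grid = multistep_scheme +
  fixes dt :: real
  assumes dt_pos: "dt > 0"
begin

definition "dx = dt / lam"

lemma dx_pos: "dx > 0" using dt_pos lam_pos by (simp add: dx_def)

lemma dxof_eq: "dxof lam dt = dx" by (simp add: dxof_def dx_def)

lemma c_dt_pos: "c * dt > 0" using c_pos dt_pos by simp

lemma time_offset_nonneg: "0 \<le> c * (real m * dt)" using c_pos dt_pos by simp

text \<open>Applied to the primitive \<open>F\<close> of \<open>u\<^sub>0\<close>, \<open>cell_quotient F j n\<close> is the cell average
  \<open>u\<^sup>int\<^sub>j\<^sub>,\<^sub>n\<close> and \<open>trace_quotient F n\<close> the trace average \<open>u\<^sup>tr\<^sub>n\<close>; all the errors then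
  become linear functionals of \<open>F\<close>.\<close>

definition cell_quotient :: "(real \<Rightarrow> real) \<Rightarrow> int \<Rightarrow> nat \<Rightarrow> real" where
  "cell_quotient f j m
     = (f (real_of_int (j + 1) * dx + c * (real m * dt)) - f (real_of_int j * dx + c * (real m * dt))) / dx"

definition trace_quotient :: "(real \<Rightarrow> real) \<Rightarrow> nat \<Rightarrow> real" where
  "trace_quotient f m = (f (c * (real (m + 1) * dt)) - f (c * (real m * dt))) / (c * dt)"

definition interior_residual :: "(real \<Rightarrow> real) \<Rightarrow> int \<Rightarrow> nat \<Rightarrow> real" where
  "interior_residual f j m = (1 / dt) * ((\<Sum>\<sigma>\<le>k. alpha \<sigma> * cell_quotient f j (m + \<sigma>))
     + lam * (\<Sum>\<sigma><k. beta \<sigma> * (\<Sum>l = - int r..int p. A l * cell_quotient f (j + l) (m + \<sigma>))))"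

definition bl0_amplitude :: "(real \<Rightarrow> real) \<Rightarrow> nat \<Rightarrow> real" where
  "bl0_amplitude f m = (if m < k then 0 else trace_quotient f m)"

definition trace_defect :: "(real \<Rightarrow> real) \<Rightarrow> nat \<Rightarrow> real" where
  "trace_defect f m = (\<Sum>\<tau>\<le>k. alpha \<tau> * trace_quotient f (m + \<tau>))"

text \<open>Should \<open>beta_sum\<close> vanish, \<open>inverse\<close> returns \<open>0\<close> and the corrector is switched off; none of
  the estimates below needs \<open>beta_sum \<noteq> 0\<close>.\<close>

definition bl1_amplitude :: "(real \<Rightarrow> real) \<Rightarrow> nat \<Rightarrow> real" where
  "bl1_amplitude f m = (if m < k then 0 else inverse (dt * beta_sum) * trace_defect f m)"

definition w_residual :: "(real \<Rightarrow> real) \<Rightarrow> nat \<Rightarrow> real" where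
  "w_residual f m = (1 / dt) * ((\<Sum>\<sigma>\<le>k. alpha \<sigma> * bl0_amplitude f (m + \<sigma>))
     - lam * dx * (\<Sum>\<sigma><k. beta \<sigma> * bl1_amplitude f (m + \<sigma>)))"

definition wt_residual :: "(real \<Rightarrow> real) \<Rightarrow> nat \<Rightarrow> real" where
  "wt_residual f m = (dx / dt) * (\<Sum>\<sigma>\<le>k. alpha \<sigma> * bl1_amplitude f (m + \<sigma>))"

definition boundary_residual :: "(real \<Rightarrow> real) \<Rightarrow> nat \<Rightarrow> nat \<Rightarrow> real" where
  "boundary_residual f j n = cell_quotient f (int j) n - trace_quotient f n"

lemma cell_quotient_diff:
  "cell_quotient (\<lambda>x. f x - g x) j m
    = cell_quotient f j m - cell_quotient g j m"
  by (simp add: cell_quotient_def diff_divide_distrib)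

lemma trace_quotient_diff:
  "trace_quotient (\<lambda>x. f x - g x) m
    = trace_quotient f m - trace_quotient g m"
  by (simp add: trace_quotient_def diff_divide_distrib)

lemma interior_residual_diff:
  "interior_residual (\<lambda>x. f x - g x) j m
    = interior_residual f j m - interior_residual g j m"
  by (simp add: interior_residual_def cell_quotient_diff right_diff_distrib sum_subtractf
      diff_divide_distrib add_divide_distrib)

lemma bl0_amplitude_diff:
  "bl0_amplitude (\<lambda>x. f x - g x) m
    = bl0_amplitude f m - bl0_amplitude g m"
  by (simp add: bl0_amplitude_def trace_quotient_diff)

lemma trace_defect_diff:
  "trace_defect (\<lambda>x. f x - g x) m
    = trace_defect f m - trace_defect g m"
  by (simp add: trace_defect_def trace_quotient_diff right_diff_distrib sum_subtractf)

lemma bl1_amplitude_diff: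
  "bl1_amplitude (\<lambda>x. f x - g x) m
    = bl1_amplitude f m - bl1_amplitude g m"
  by (simp add: bl1_amplitude_def trace_defect_diff right_diff_distrib)

lemma w_residual_diff:
  "w_residual (\<lambda>x. f x - g x) m
    = w_residual f m - w_residual g m"
  by (simp add: w_residual_def bl0_amplitude_diff bl1_amplitude_diff right_diff_distrib sum_subtractf)

lemma wt_residual_diff:
  "wt_residual (\<lambda>x. f x - g x) m
    = wt_residual f m - wt_residual g m"
  by (simp add: wt_residual_def bl1_amplitude_diff right_diff_distrib sum_subtractf)

lemma boundary_residual_diff:
  "boundary_residual (\<lambda>x. f x - g x) j n
    = boundary_residual f j n - boundary_residual g j n"
  by (simp add: boundary_residual_def cell_quotient_diff trace_quotient_diff)

lemma cell_quotient_quadratic: "cell_quotient (\<lambda>x. c0 + c1 * (x - s) + c2 * (x - s)\<^sup>2) j m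
    = c1 + c2 * (2 * (of_int j * dx + c * (real m * dt) - s) + dx)"
  using dx_pos by (simp add: cell_quotient_def field_simps power2_eq_square)

lemma trace_quotient_quadratic: "trace_quotient (\<lambda>x. c0 + c1 * (x - s) + c2 * (x - s)\<^sup>2) m
    = (c1 + c2 * (c * dt - 2 * s)) + (2 * c2 * c * dt) * real m"
  using c_pos dt_pos by (simp add: trace_quotient_def field_simps power2_eq_square)

text \<open>The consistency conditions (A1) and (A2) make the interior scheme exact on quadratics.\<close>

lemma interior_residual_quadratic: "interior_residual (\<lambda>x. c0 + c1 * (x - s) + c2 * (x - s)\<^sup>2) j m = 0"
proof -
  let ?q = "\<lambda>x. c0 + c1 * (x - s) + c2 * (x - s)\<^sup>2"
  define X where "X = c1 + c2 * (2 * (of_int j * dx + c * (real m * dt) - s) + dx)"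
  define Y where "Y = 2 * c2 * c * dt"
  define Z where "Z = 2 * c2 * dx"
  have e1: "cell_quotient ?q j (m + \<sigma>) = X + Y * real \<sigma>" for \<sigma>
    unfolding cell_quotient_quadratic by (simp add: X_def Y_def algebra_simps)
  have e2: "cell_quotient ?q (j + l) (m + \<sigma>) = (X + Y * real \<sigma>) + Z * of_int l" for \<sigma> l
    unfolding cell_quotient_quadratic by (simp add: X_def Y_def Z_def algebra_simps)
  have "interior_residual ?q j m = (1 / dt) * (Y * beta_sum + lam * (\<Sum>\<sigma><k. beta \<sigma> * (Z * a)))"
    unfolding interior_residual_def e1 e2 alpha_sum_affine A_sum_affine ..
  also have "\<dots> = (1 / dt) * (Y * beta_sum + lam * Z * a * beta_sum)"
    by (simp add: beta_sum_def sum_distrib_right sum_distrib_left algebra_simps)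
  also have "\<dots> = (1 / dt) * (2 * c2 * beta_sum * dt * (c + a))"
  proof -
    have "lam * Z = 2 * c2 * (lam * dx)" by (simp add: Z_def algebra_simps)
    also have "\<dots> = 2 * c2 * dt" using lam_pos by (simp add: dx_def)
    finally have lz: "lam * Z = 2 * c2 * dt" .
    show ?thesis unfolding lz by (simp add: Y_def algebra_simps)
  qed
  also have "\<dots> = 0" by (simp add: c_def)
  finally show ?thesis .
qed

lemma trace_defect_quadratic: "trace_defect (\<lambda>x. c0 + c1 * (x - s) + c2 * (x - s)\<^sup>2) m' = (2 * c2 * c * dt) * beta_sum"
proof -
  have "trace_defect (\<lambda>x. c0 + c1 * (x - s) + c2 * (x - s)\<^sup>2) m'
     = (\<Sum>\<tau>\<le>k. alpha \<tau> * (((c1 + c2 * (c * dt - 2 * s)) + (2 * c2 * c * dt) * real m') + (2 * c2 * c * dt) * real \<tau>))"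
    unfolding trace_defect_def trace_quotient_quadratic by (simp add: algebra_simps)
  thus ?thesis by (simp only: alpha_sum_affine)
qed

lemma w_residual_quadratic: assumes "k \<le> m" shows "w_residual (\<lambda>x. c0 + c1 * (x - s) + c2 * (x - s)\<^sup>2) m = 0"
proof -
  let ?q = "\<lambda>x. c0 + c1 * (x - s) + c2 * (x - s)\<^sup>2"
  define Q0 where "Q0 = 2 * c2 * c * dt"
  define P0 where "P0 = c1 + c2 * (c * dt - 2 * s)"
  have e0: "bl0_amplitude ?q (m + \<sigma>) = (P0 + Q0 * real m) + Q0 * real \<sigma>" for \<sigma>
  proof -
    have "\<not> m + \<sigma> < k" using assms by simp
    thus ?thesis unfolding bl0_amplitude_def trace_quotient_quadratic by (simp add: P0_def Q0_def algebra_simps)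
  qed
  have e1: "bl1_amplitude ?q (m + \<sigma>) = inverse (dt * beta_sum) * (Q0 * beta_sum)" for \<sigma>
  proof -
    have "\<not> m + \<sigma> < k" using assms by simp
    thus ?thesis unfolding bl1_amplitude_def trace_defect_quadratic by (simp add: Q0_def)
  qed
  have "w_residual ?q m = (1 / dt) * (Q0 * beta_sum - lam * dx * (beta_sum * (inverse (dt * beta_sum) * (Q0 * beta_sum))))"
    unfolding w_residual_def e0 e1 alpha_sum_affine by (simp add: beta_sum_def sum_distrib_right)
  also have "\<dots> = 0"
    using lam_pos dt_pos by (simp add: dx_def, cases "beta_sum = 0") (simp_all add: field_simps)
  finally show ?thesis .
qed

lemma wt_residual_quadratic: assumes "k \<le> m" shows "wt_residual (\<lambda>x. c0 + c1 * (x - s) + c2 * (x - s)\<^sup>2) m = 0"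
proof -
  have e1: "bl1_amplitude (\<lambda>x. c0 + c1 * (x - s) + c2 * (x - s)\<^sup>2) (m + \<sigma>) = inverse (dt * beta_sum) * ((2 * c2 * c * dt) * beta_sum)" for \<sigma>
  proof -
    have "\<not> m + \<sigma> < k" using assms by simp
    thus ?thesis unfolding bl1_amplitude_def trace_defect_quadratic by simp
  qed
  show ?thesis unfolding wt_residual_def e1 by (simp add: sum_distrib_right[symmetric] alpha_sum)
qed

lemma boundary_residual_affine: "boundary_residual (\<lambda>x. c0 + c1 * (x - s)) j n = 0"
proof -
  have "boundary_residual (\<lambda>x. c0 + c1 * (x - s) + 0 * (x - s)\<^sup>2) j n = 0"
    unfolding boundary_residual_def cell_quotient_quadratic trace_quotient_quadratic by simp
  thus ?thesis by simp
qed

lemma interior_residual_minus_quadratic: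
  "interior_residual (\<lambda>x. f x - (c0 + c1 * (x - s) + c2 * (x - s)\<^sup>2)) j m = interior_residual f j m"
  unfolding interior_residual_diff interior_residual_quadratic by simp

lemma w_residual_minus_quadratic:
  "k \<le> m \<Longrightarrow> w_residual (\<lambda>x. f x - (c0 + c1 * (x - s) + c2 * (x - s)\<^sup>2)) m = w_residual f m"
  unfolding w_residual_diff by (subst w_residual_quadratic) simp_all

lemma wt_residual_minus_quadratic:
  "k \<le> m \<Longrightarrow> wt_residual (\<lambda>x. f x - (c0 + c1 * (x - s) + c2 * (x - s)\<^sup>2)) m = wt_residual f m"
  unfolding wt_residual_diff by (subst wt_residual_quadratic) simp_all

lemma boundary_residual_minus_affine:
  "boundary_residual (\<lambda>x. f x - (c0 + c1 * (x - s))) j n = boundary_residual f j n"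
  unfolding boundary_residual_diff boundary_residual_affine by simp

definition "stencil_window j m = {(of_int j - real r) * dx + c * (real m * dt) ..
   (of_int j - real r) * dx + c * (real m * dt) + dt * h_int}"

definition "trace_window m = {c * (real m * dt) .. c * (real m * dt) + dt * h_tr}"

definition "boundary_window n = {c * (real n * dt) .. c * (real n * dt) + dt * h_bdry}"

lemma cell_quotient_bound:
  assumes "\<bar>f (of_int (j + 1) * dx + c * (real m * dt))\<bar> \<le> B" "\<bar>f (of_int j * dx + c * (real m * dt))\<bar> \<le> B"
  shows "\<bar>cell_quotient f j m\<bar> \<le> 2 * B / dx"
proof -
  have "\<bar>cell_quotient f j m\<bar> = \<bar>f (of_int (j + 1) * dx + c * (real m * dt)) - f (of_int j * dx + c * (real m * dt))\<bar> / dx"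
    using dx_pos by (simp add: cell_quotient_def abs_divide)
  also have "\<dots> \<le> 2 * B / dx"
    using dx_pos assms by (intro divide_right_mono) (auto simp: abs_diff_le_iff abs_le_iff)
  finally show ?thesis .
qed

lemma trace_quotient_bound:
  assumes "\<bar>f (c * (real (q + 1) * dt))\<bar> \<le> B" "\<bar>f (c * (real q * dt))\<bar> \<le> B"
  shows "\<bar>trace_quotient f q\<bar> \<le> 2 * B / (c * dt)"
proof -
  have "\<bar>trace_quotient f q\<bar> = \<bar>f (c * (real (q + 1) * dt)) - f (c * (real q * dt))\<bar> / (c * dt)"
    using c_dt_pos by (simp add: trace_quotient_def abs_divide)
  also have "\<dots> \<le> 2 * B / (c * dt)"
    using c_dt_pos assms by (intro divide_right_mono) (auto simp: abs_diff_le_iff abs_le_iff)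
  finally show ?thesis .
qed

lemma time_node_in_trace_window:
  assumes "m \<le> q" "q \<le> m + 2 * k + 1"
  shows "c * (real q * dt) \<in> trace_window m"
proof -
  have "c * (real q * dt) = c * (real m * dt) + (c * dt) * (real q - real m)" by (simp add: algebra_simps)
  moreover have "0 \<le> (c * dt) * (real q - real m)" using c_dt_pos assms by simp
  moreover have "(c * dt) * (real q - real m) \<le> (c * dt) * real (2 * k + 1)"
    using c_dt_pos assms by (intro mult_left_mono) auto
  ultimately show ?thesis by (simp add: trace_window_def h_tr_def algebra_simps)
qed

lemma stencil_node_in_stencil_window:
  assumes "of_int j - int r \<le> q" "q \<le> of_int j + int p + 1" "\<sigma> \<le> k"
  shows "of_int q * dx + c * (real (m + \<sigma>) * dt) \<in> stencil_window j m"
proof -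
  have "(of_int j - real r) * dx \<le> of_int q * dx"
    using assms(1) dx_pos by (intro mult_right_mono) (auto simp flip: of_int_le_iff)
  moreover have "of_int q * dx \<le> (of_int j - real r + real (r + p + 1)) * dx"
    using assms(2) dx_pos by (intro mult_right_mono) (auto simp flip: of_int_le_iff)
  moreover have "0 \<le> (c * dt) * real \<sigma>" "(c * dt) * real \<sigma> \<le> (c * dt) * real k"
    using c_dt_pos assms(3) by (auto intro: mult_left_mono)
  moreover have "dt * h_int = real (r + p + 1) * dx + c * (real k * dt)"
    using lam_pos by (simp add: h_int_def dx_def field_simps)
  ultimately show ?thesis by (simp add: stencil_window_def algebra_simps)
qed

lemma interior_residual_bound:
  assumes B: "\<And>x. x \<in> stencil_window j m \<Longrightarrow> \<bar>f x\<bar> \<le> B"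
  shows "\<bar>interior_residual f j m\<bar> \<le> m_int / dt\<^sup>2 * B"
proof -
  have quot: "\<bar>cell_quotient f (j + l) (m + \<sigma>)\<bar> \<le> 2 * B / dx" if "l \<in> {- int r..int p}" "\<sigma> \<le> k" for l \<sigma>
    by (rule cell_quotient_bound; rule B; rule stencil_node_in_stencil_window) (use that in auto)
  have "\<bar>\<Sum>\<sigma>\<le>k. alpha \<sigma> * cell_quotient f j (m + \<sigma>)\<bar> \<le> alpha_norm * (2 * B / dx)"
    unfolding alpha_norm_def by (rule abs_weighted_sum_le) (use quot[of 0] in auto)
  moreover have "\<bar>\<Sum>\<sigma><k. beta \<sigma> * (\<Sum>l = - int r..int p. A l * cell_quotient f (j + l) (m + \<sigma>))\<bar>
      \<le> beta_norm * (A_norm * (2 * B / dx))"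
    unfolding beta_norm_def
    by (rule abs_weighted_sum_le, unfold A_norm_def, rule abs_weighted_sum_le) (use quot in auto)
  ultimately have "\<bar>interior_residual f j m\<bar>
      \<le> (1 / dt) * (alpha_norm * (2 * B / dx) + lam * (beta_norm * (A_norm * (2 * B / dx))))"
    unfolding interior_residual_def using dt_pos lam_pos by (intro abs_scaled_combination_le) auto
  also have "\<dots> = m_int / dt\<^sup>2 * B"
    using dt_pos lam_pos by (simp add: m_int_def dx_def field_simps power2_eq_square)
  finally show ?thesis .
qed

lemma trace_quotient_bound_window:
  assumes B: "\<And>x. x \<in> trace_window m \<Longrightarrow> \<bar>f x\<bar> \<le> B" and q: "m \<le> q" "q \<le> m + 2 * k"
  shows "\<bar>trace_quotient f q\<bar> \<le> 2 * B / (c * dt)"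
  by (rule trace_quotient_bound; rule B; rule time_node_in_trace_window) (use q in auto)

lemma bl0_amplitude_bound_window:
  assumes B: "\<And>x. x \<in> trace_window m \<Longrightarrow> \<bar>f x\<bar> \<le> B" and q: "m \<le> q" "q \<le> m + 2 * k"
  shows "\<bar>bl0_amplitude f q\<bar> \<le> 2 * B / (c * dt)"
proof -
  have quot: "\<bar>trace_quotient f q\<bar> \<le> 2 * B / (c * dt)" by (rule trace_quotient_bound_window[of m f B, OF B q])
  thus ?thesis using order_trans[OF abs_ge_zero quot] by (simp add: bl0_amplitude_def)
qed

lemma bl1_amplitude_bound_window:
  assumes B: "\<And>x. x \<in> trace_window m \<Longrightarrow> \<bar>f x\<bar> \<le> B" and q: "m \<le> q" "q \<le> m + k"
  shows "\<bar>bl1_amplitude f q\<bar> \<le> \<bar>inverse beta_sum\<bar> / dt * (alpha_norm * (2 * B / (c * dt)))"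
proof -
  have defect: "\<bar>trace_defect f q\<bar> \<le> alpha_norm * (2 * B / (c * dt))"
    unfolding trace_defect_def alpha_norm_def
    by (rule abs_weighted_sum_le) (rule trace_quotient_bound_window[of m f B, OF B], use q in auto)
  show ?thesis
  proof (cases "q < k")
    case True
    have "0 \<le> \<bar>inverse beta_sum\<bar> / dt * (alpha_norm * (2 * B / (c * dt)))"
      by (rule mult_nonneg_nonneg) (use dt_pos order_trans[OF abs_ge_zero defect] in auto)
    with True show ?thesis by (simp add: bl1_amplitude_def)
  next
    case False
    hence "\<bar>bl1_amplitude f q\<bar> = \<bar>inverse beta_sum\<bar> / dt * \<bar>trace_defect f q\<bar>"
      using dt_pos by (simp add: bl1_amplitude_def abs_mult field_simps)
    also have "\<dots> \<le> \<bar>inverse beta_sum\<bar> / dt * (alpha_norm * (2 * B / (c * dt)))"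
      using dt_pos by (intro mult_left_mono[OF defect]) simp
    finally show ?thesis .
  qed
qed

lemma w_residual_bound:
  assumes B: "\<And>x. x \<in> trace_window m \<Longrightarrow> \<bar>f x\<bar> \<le> B"
  shows "\<bar>w_residual f m\<bar> \<le> m_w / dt\<^sup>2 * B"
proof -
  have "\<bar>\<Sum>\<sigma>\<le>k. alpha \<sigma> * bl0_amplitude f (m + \<sigma>)\<bar> \<le> alpha_norm * (2 * B / (c * dt))"
    unfolding alpha_norm_def by (rule abs_weighted_sum_le) (rule bl0_amplitude_bound_window[of m f B, OF B], auto)
  moreover have "\<bar>\<Sum>\<sigma><k. beta \<sigma> * bl1_amplitude f (m + \<sigma>)\<bar>
      \<le> beta_norm * (\<bar>inverse beta_sum\<bar> / dt * (alpha_norm * (2 * B / (c * dt))))"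
    unfolding beta_norm_def by (rule abs_weighted_sum_le) (rule bl1_amplitude_bound_window[of m f B, OF B], auto)
  ultimately have "\<bar>w_residual f m\<bar> \<le> (1 / dt) * (alpha_norm * (2 * B / (c * dt))
      + lam * dx * (beta_norm * (\<bar>inverse beta_sum\<bar> / dt * (alpha_norm * (2 * B / (c * dt))))))"
    unfolding w_residual_def using dt_pos dx_pos lam_pos by (intro abs_scaled_combination_le) auto
  also have "\<dots> = m_w / dt\<^sup>2 * B"
    using dt_pos lam_pos c_pos by (simp add: m_w_def dx_def field_simps power2_eq_square)
  finally show ?thesis .
qed

lemma wt_residual_bound:
  assumes B: "\<And>x. x \<in> trace_window m \<Longrightarrow> \<bar>f x\<bar> \<le> B"
  shows "\<bar>wt_residual f m\<bar> \<le> m_wt / dt\<^sup>2 * B"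
proof -
  have "\<bar>wt_residual f m\<bar> = dx / dt * \<bar>\<Sum>\<sigma>\<le>k. alpha \<sigma> * bl1_amplitude f (m + \<sigma>)\<bar>"
    unfolding wt_residual_def using dt_pos dx_pos by (simp add: abs_mult)
  also have "\<dots> \<le> dx / dt * ((\<Sum>\<sigma>\<le>k. \<bar>alpha \<sigma>\<bar>) * (\<bar>inverse beta_sum\<bar> / dt * (alpha_norm * (2 * B / (c * dt)))))"
    using dt_pos dx_pos
    by (intro mult_left_mono abs_weighted_sum_le) (rule bl1_amplitude_bound_window[of m f B, OF B], auto)
  also have "\<dots> = m_wt / dt\<^sup>2 * B"
    using dt_pos lam_pos c_pos by (simp add: alpha_norm_def[symmetric] m_wt_def dx_def field_simps power2_eq_square)
  finally show ?thesis .
qed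

lemma boundary_residual_bound:
  assumes B: "\<And>x. x \<in> boundary_window n \<Longrightarrow> \<bar>f x\<bar> \<le> B" and j: "j < r"
  shows "\<bar>boundary_residual f j n\<bar> \<le> m_bdry / dt * B"
proof -
  have window: "boundary_window n = {c * (real n * dt) .. c * (real n * dt) + (real r * dx + c * dt)}"
    using lam_pos by (simp add: boundary_window_def h_bdry_def dx_def field_simps)
  have "real (j + 1) * dx \<le> real r * dx" using j dx_pos by (intro mult_right_mono) auto
  hence "\<bar>cell_quotient f (int j) n\<bar> \<le> 2 * B / dx"
    by (intro cell_quotient_bound B) (use dx_pos c_dt_pos in \<open>auto simp: window algebra_simps\<close>)
  moreover have "\<bar>trace_quotient f n\<bar> \<le> 2 * B / (c * dt)"
    by (intro trace_quotient_bound B) (use dx_pos c_dt_pos in \<open>auto simp: window algebra_simps\<close>)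
  ultimately have "\<bar>boundary_residual f j n\<bar> \<le> 2 * B / dx + 2 * B / (c * dt)"
    unfolding boundary_residual_def by linarith
  also have "\<dots> = m_bdry / dt * B"
    using dt_pos lam_pos c_pos by (simp add: m_bdry_def dx_def field_simps)
  finally show ?thesis .
qed

end

section \<open>Local estimates of the consistency errors\<close>

locale scheme_with_H2_data = multistep_grid + boundary_layers + H2_halfline
begin

lemma u_int_eq_cell_quotient: "u_int u0 a lam dt j m = cell_quotient primitive (int j) m"
proof -
  have "(LINT x:{real j * dx..real (j + 1) * dx}|lborel. u0 (x + c * (real m * dt)))
      = primitive (real (j + 1) * dx + c * (real m * dt)) - primitive (real j * dx + c * (real m * dt))"
    by (intro integral_u0_shift) (use dx_pos time_offset_nonneg in \<open>auto intro: mult_right_mono\<close>)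
  thus ?thesis
    unfolding u_int_def cell_quotient_def dxof_eq by (simp add: c_def add.commute)
qed

lemma u_tr_eq_trace_quotient: "u_tr u0 a dt m = trace_quotient primitive m"
proof -
  have "(LINT t:{real m * dt..real (m + 1) * dt}|lborel. u0 (c * t))
      = primitive (c * (real (m + 1) * dt)) / c - primitive (c * (real m * dt)) / c"
    by (rule integral_u0_scale) (use dt_pos c_pos in \<open>auto intro: mult_right_mono\<close>)
  thus ?thesis
    unfolding u_tr_def trace_quotient_def using c_pos dt_pos by (simp add: c_def field_simps)
qed

lemma u_app_eq:
  "u_app u0 a lam dt k alpha beta w wt j n
     = cell_quotient primitive (int j) n + bl0_amplitude primitive n * w j
       + dx * (bl1_amplitude primitive n * wt j)"
  by (simp add: u_app_def u_bl0_def u_bl1_def bl0_amplitude_def bl1_amplitude_def trace_defect_def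
      dxof_eq u_int_eq_cell_quotient u_tr_eq_trace_quotient beta_sum_def)

text \<open>Away from the boundary the stencil annihilates the layer \<open>w\<close>, and turns the corrector
  \<open>w\<^sub>t\<close> into \<open>-w\<close>.\<close>

lemma stencil_u_app:
  assumes "r \<le> j"
  shows "(\<Sum>l = - int r..int p. A l * u_app u0 a lam dt k alpha beta w wt (nat (int j + l)) n)
    = (\<Sum>l = - int r..int p. A l * cell_quotient primitive (int j + l) n)
      - dx * bl1_amplitude primitive n * w j"
proof -
  have "(\<Sum>l = - int r..int p. A l * u_app u0 a lam dt k alpha beta w wt (nat (int j + l)) n)
    = (\<Sum>l = - int r..int p. A l * cell_quotient primitive (int j + l) n
        + bl0_amplitude primitive n * (A l * w (nat (int (j - r) + l + int r)))
        + dx * bl1_amplitude primitive n * (A l * wt (nat (int j + l))))"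
    using assms by (intro sum.cong refl) (simp add: u_app_eq algebra_simps of_nat_diff)
  also have "\<dots> = (\<Sum>l = - int r..int p. A l * cell_quotient primitive (int j + l) n)
      + bl0_amplitude primitive n * (\<Sum>l = - int r..int p. A l * w (nat (int (j - r) + l + int r)))
      + dx * bl1_amplitude primitive n * (\<Sum>l = - int r..int p. A l * wt (nat (int j + l)))"
    by (simp add: sum.distrib sum_distrib_left)
  also have "(\<Sum>l = - int r..int p. A l * w (nat (int (j - r) + l + int r))) = 0"
    using w_rec by blast
  also have "(\<Sum>l = - int r..int p. A l * wt (nat (int j + l))) = - w j"
    using wt_rec assms by (simp add: eq_neg_iff_add_eq_0)
  finally show ?thesis by simp
qed

lemma eps_err_decomposition:
  assumes "k \<le> n"
  shows "eps_err u0 a lam dt k alpha beta w wt r p A (i + r) n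
     = interior_residual primitive (int (i + r)) (n - k) + w (i + r) * w_residual primitive (n - k)
       + wt (i + r) * wt_residual primitive (n - k)"
  using assms
  by (simp only: eps_err_def stencil_u_app[OF le_add2])
    (simp add: u_app_eq interior_residual_def w_residual_def wt_residual_def
      algebra_simps sum.distrib sum_distrib_left sum_distrib_right sum_subtractf)

lemma eta_err_eq:
  assumes "j < r"
  shows "eta_err u0 a lam dt k alpha beta w wt j (i + k) = boundary_residual primitive j (i + k)"
  using assms w_init wt_init
  by (simp add: eta_err_def u_app_def u_bl0_def u_bl1_def u_int_eq_cell_quotient
      u_tr_eq_trace_quotient boundary_residual_def)

lemma primitive_estimate_Taylor2:
  assumes annihil: "\<And>f c0 c1 c2. L (\<lambda>x. f x - (c0 + c1 * (x - s) + c2 * (x - s)\<^sup>2)) = L f"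
    and bounded: "\<And>f B. (\<And>x. x \<in> {s..s + dt * h} \<Longrightarrow> \<bar>f x\<bar> \<le> B) \<Longrightarrow> \<bar>L f\<bar> \<le> M / dt\<^sup>2 * B"
    and "0 \<le> s" "0 \<le> h"
  shows "\<bar>L primitive\<bar> \<le> M * h\<^sup>2 * integral {s..s + dt * h} (\<lambda>t. \<bar>u2 t\<bar>)"
proof -
  have window: "{s..s + dt * h} \<subseteq> {0..s + dt * h}" using assms(3) by auto
  have "\<bar>L primitive\<bar> \<le> M / dt\<^sup>2 * ((dt * h)\<^sup>2 * integral {s..s + dt * h} (\<lambda>t. \<bar>u2 t\<bar>))"
  proof (rule functional_bound_Taylor2[OF annihil bounded])
    fix x assume x: "x \<in> {s..s + dt * h}"
    show "(primitive has_real_derivative u0 x) (at x within {s..s + dt * h})"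
      by (rule primitive_has_derivative[OF x window])
    show "(u0 has_real_derivative u1 x) (at x within {s..s + dt * h})"
      by (rule u0_has_derivative[OF x window])
    show "\<bar>u1 x - u1 s\<bar> \<le> integral {s..s + dt * h} (\<lambda>t. \<bar>u2 t\<bar>)"
      by (rule oscillation_le_integral_abs[OF L2_u2 u1_eq_integral assms(3) x])
  qed
  thus ?thesis using dt_pos by (simp add: power_mult_distrib)
qed

lemma interior_residual_estimate:
  "\<bar>interior_residual primitive (int (i + r)) m\<bar>
     \<le> m_int * h_int\<^sup>2 * integral {real i * dx + c * (real m * dt) .. real i * dx + c * (real m * dt) + dt * h_int} (\<lambda>t. \<bar>u2 t\<bar>)"
proof (rule primitive_estimate_Taylor2)
  show "\<bar>interior_residual f (int (i + r)) m\<bar> \<le> m_int / dt\<^sup>2 * B"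
    if "\<And>x. x \<in> {real i * dx + c * (real m * dt) .. real i * dx + c * (real m * dt) + dt * h_int} \<Longrightarrow> \<bar>f x\<bar> \<le> B"
    for f B
    by (rule interior_residual_bound) (use that in \<open>simp add: stencil_window_def\<close>)
qed (use interior_residual_minus_quadratic dx_pos time_offset_nonneg window_consts_nonneg in auto)

lemma w_residual_estimate:
  assumes "k \<le> m"
  shows "\<bar>w_residual primitive m\<bar> \<le> m_w * h_tr\<^sup>2 * integral {c * (real m * dt) .. c * (real m * dt) + dt * h_tr} (\<lambda>t. \<bar>u2 t\<bar>)"
  by (rule primitive_estimate_Taylor2[OF w_residual_minus_quadratic[OF assms] w_residual_bound])
    (use time_offset_nonneg window_consts_nonneg in \<open>auto simp: trace_window_def\<close>)

lemma wt_residual_estimate: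
  assumes "k \<le> m"
  shows "\<bar>wt_residual primitive m\<bar> \<le> m_wt * h_tr\<^sup>2 * integral {c * (real m * dt) .. c * (real m * dt) + dt * h_tr} (\<lambda>t. \<bar>u2 t\<bar>)"
  by (rule primitive_estimate_Taylor2[OF wt_residual_minus_quadratic[OF assms] wt_residual_bound])
    (use time_offset_nonneg window_consts_nonneg in \<open>auto simp: trace_window_def\<close>)

lemma boundary_residual_estimate:
  assumes "j < r"
  shows "\<bar>boundary_residual primitive j n\<bar>
    \<le> m_bdry * h_bdry * integral {c * (real n * dt) .. c * (real n * dt) + dt * h_bdry} (\<lambda>t. \<bar>u1 t\<bar>)"
proof -
  define s where "s = c * (real n * dt)"
  have s: "0 \<le> s" unfolding s_def by (rule time_offset_nonneg)
  have window: "{s..s + dt * h_bdry} \<subseteq> {0..s + dt * h_bdry}" using s by auto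
  have "\<bar>boundary_residual primitive j n\<bar> \<le> m_bdry / dt * (dt * h_bdry * integral {s..s + dt * h_bdry} (\<lambda>t. \<bar>u1 t\<bar>))"
  proof (rule functional_bound_Taylor1[where L="\<lambda>f. boundary_residual f j n" and U=u0])
    show "\<bar>boundary_residual f j n\<bar> \<le> m_bdry / dt * B" if "\<And>x. x \<in> {s..s + dt * h_bdry} \<Longrightarrow> \<bar>f x\<bar> \<le> B" for f B
      by (rule boundary_residual_bound[OF _ assms]) (use that in \<open>simp add: s_def boundary_window_def\<close>)
    fix x assume x: "x \<in> {s..s + dt * h_bdry}"
    show "(primitive has_real_derivative u0 x) (at x within {s..s + dt * h_bdry})"
      by (rule primitive_has_derivative[OF x window])
    show "\<bar>u0 x - u0 s\<bar> \<le> integral {s..s + dt * h_bdry} (\<lambda>t. \<bar>u1 t\<bar>)"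
      by (rule oscillation_le_integral_abs[OF L2_u1 _ s x]) (simp add: u0_eq_integral u0_zero)
  qed (rule boundary_residual_minus_affine)
  thus ?thesis using dt_pos by (simp add: s_def)
qed

text \<open>At the first time levels the trace windows touch the corner \<open>x = 0\<close>, where the
  primitive vanishes to second order because \<open>u\<^sub>0(0) = 0\<close>; only the \<open>L\<^sup>\<infinity>\<close> bound of
  \<open>u\<^sub>1\<close> is available there.\<close>

lemma primitive_near_corner:
  assumes "x \<in> {0..dt * h_start}"
  shows "\<bar>primitive x\<bar> \<le> (dt * h_start)\<^sup>2 * sqrt (2 * (L2sq u1 + L2sq u2))"
proof (rule abs_le_of_second_derivative_bound[where s=0 and G=primitive and g=u0 and h=u1])
  fix y assume "y \<in> {0..0 + dt * h_start}"
  hence y: "y \<in> {0..dt * h_start}" by simp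
  show "(primitive has_real_derivative u0 y) (at y within {0..0 + dt * h_start})"
    using primitive_has_derivative[OF y order_refl] by simp
  show "(u0 has_real_derivative u1 y) (at y within {0..0 + dt * h_start})"
    using u0_has_derivative[OF y order_refl] by simp
  show "\<bar>u1 y\<bar> \<le> sqrt (2 * (L2sq u1 + L2sq u2))"
    using real_sqrt_le_mono[OF u1_square_le[of y]] y by simp
qed (use assms u0_zero in \<open>simp_all add: primitive_def\<close>)

lemma trace_window_near_corner:
  assumes "m < k"
  shows "trace_window m \<subseteq> {0..dt * h_start}"
proof -
  have "c * (real m * dt) + dt * h_tr = (c * dt) * (real m + real (2 * k + 1))"
    by (simp add: h_tr_def algebra_simps)
  also have "\<dots> \<le> (c * dt) * real (3 * k)"
    using c_dt_pos assms by (intro mult_left_mono) auto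
  finally show ?thesis
    using time_offset_nonneg[of m] by (auto simp: trace_window_def h_start_def algebra_simps)
qed

lemma w_residual_start:
  assumes "m < k"
  shows "\<bar>w_residual primitive m\<bar> \<le> m_w * h_start\<^sup>2 * sqrt (2 * (L2sq u1 + L2sq u2))"
proof -
  have "\<bar>w_residual primitive m\<bar> \<le> m_w / dt\<^sup>2 * ((dt * h_start)\<^sup>2 * sqrt (2 * (L2sq u1 + L2sq u2)))"
    by (rule w_residual_bound, rule primitive_near_corner) (use trace_window_near_corner[OF assms] in auto)
  thus ?thesis using dt_pos by (simp add: power_mult_distrib)
qed

lemma wt_residual_start:
  assumes "m < k"
  shows "\<bar>wt_residual primitive m\<bar> \<le> m_wt * h_start\<^sup>2 * sqrt (2 * (L2sq u1 + L2sq u2))"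
proof -
  have "\<bar>wt_residual primitive m\<bar> \<le> m_wt / dt\<^sup>2 * ((dt * h_start)\<^sup>2 * sqrt (2 * (L2sq u1 + L2sq u2)))"
    by (rule wt_residual_bound, rule primitive_near_corner) (use trace_window_near_corner[OF assms] in auto)
  thus ?thesis using dt_pos by (simp add: power_mult_distrib)
qed

end

section \<open>Summing the local estimates\<close>

context boundary_layers
begin

definition "K_late = 3 / lam * ((m_int * h_int\<^sup>2)\<^sup>2 * h_int * real (nat \<lceil>lam * h_int\<rceil>)
   + (m_w * h_tr\<^sup>2)\<^sup>2 * h_tr * w_energy + (m_wt * h_tr\<^sup>2)\<^sup>2 * h_tr * wt_energy)"

definition "K_early = 3 / lam * ((m_int * h_int\<^sup>2)\<^sup>2 * h_int * real (nat \<lceil>lam * h_int\<rceil>)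
   + 2 * (m_w * h_start\<^sup>2)\<^sup>2 * w_energy + 2 * (m_wt * h_start\<^sup>2)\<^sup>2 * wt_energy)"

definition "K_eta = real r * (m_bdry * h_bdry)\<^sup>2 * h_bdry * real (nat \<lceil>h_bdry / c\<rceil>)"

lemma error_consts_nonneg: "0 \<le> K_late" "0 \<le> K_early" "0 \<le> K_eta"
  unfolding K_late_def K_early_def K_eta_def
  using lam_pos c_pos window_consts_nonneg energies_nonneg
  by (intro mult_nonneg_nonneg add_nonneg_nonneg of_nat_0_le_iff; simp)+

end

context scheme_with_H2_data
begin

lemma eps_err_energy_le:
  assumes "k \<le> n"
  defines "E \<equiv> w_residual primitive (n - k)" and "E' \<equiv> wt_residual primitive (n - k)"
  shows "summable (\<lambda>i. dxof lam dt * \<bar>eps_err u0 a lam dt k alpha beta w wt r p A (i + r) n\<bar>\<^sup>2)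
    \<and> (\<Sum>i. dxof lam dt * \<bar>eps_err u0 a lam dt k alpha beta w wt r p A (i + r) n\<bar>\<^sup>2)
      \<le> 3 * dx * ((m_int * h_int\<^sup>2)\<^sup>2 * (dt * h_int) * (real (nat \<lceil>lam * h_int\<rceil>) * L2sq u2)
           + E\<^sup>2 * w_energy + E'\<^sup>2 * wt_energy)"
proof -
  define s where "s = c * (real (n - k) * dt)"
  have s: "0 \<le> s" unfolding s_def by (rule time_offset_nonneg)
  have window: "dt * h_int = (lam * h_int) * dx" using lam_pos by (simp add: dx_def)
  define G where "G i = integral {s + real i * dx .. s + real i * dx + dt * h_int} (\<lambda>t. (u2 t)\<^sup>2)" for i
  have G: "summable G" "(\<Sum>i. G i) \<le> real (nat \<lceil>lam * h_int\<rceil>) * L2sq u2"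
    unfolding G_def window using summable_window_integrals[OF L2_u2 s dx_pos] lam_pos window_consts_nonneg by auto
  define K where "K = (m_int * h_int\<^sup>2)\<^sup>2 * (dt * h_int)"
  have interior: "(interior_residual primitive (int (i + r)) (n - k))\<^sup>2 \<le> K * G i" for i
  proof -
    let ?J = "integral {s + real i * dx .. s + real i * dx + dt * h_int} (\<lambda>t. \<bar>u2 t\<bar>)"
    have "(interior_residual primitive (int (i + r)) (n - k))\<^sup>2 \<le> (m_int * h_int\<^sup>2)\<^sup>2 * (dt * h_int * G i)"
    proof (rule square_le_of_abs_le[of _ _ ?J])
      have "0 \<le> s + real i * dx" using s dx_pos by simp
      thus "0 \<le> ?J" "?J\<^sup>2 \<le> dt * h_int * G i"
        using integral_abs_nonneg[OF L2_u2] integral_abs_square_le_L2sq(1)[OF L2_u2 _ mult_nonneg_nonneg]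
          dt_pos window_consts_nonneg by (auto simp: G_def)
      show "\<bar>interior_residual primitive (int (i + r)) (n - k)\<bar> \<le> m_int * h_int\<^sup>2 * ?J"
        using interior_residual_estimate[of i "n - k"] by (simp add: s_def add.commute)
    qed
    thus ?thesis by (simp add: K_def mult.assoc)
  qed
  have pointwise: "dxof lam dt * \<bar>eps_err u0 a lam dt k alpha beta w wt r p A (i + r) n\<bar>\<^sup>2
      \<le> 3 * dx * (K * G i + E\<^sup>2 * (w (i + r))\<^sup>2 + E'\<^sup>2 * (wt (i + r))\<^sup>2)" for i
  proof -
    have "\<bar>eps_err u0 a lam dt k alpha beta w wt r p A (i + r) n\<bar>\<^sup>2
        \<le> 3 * ((interior_residual primitive (int (i + r)) (n - k))\<^sup>2 + (w (i + r) * E)\<^sup>2 + (wt (i + r) * E')\<^sup>2)"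
      unfolding eps_err_decomposition[OF assms(1)] E_def E'_def power2_abs by (rule square_sum3_le)
    also have "\<dots> \<le> 3 * (K * G i + E\<^sup>2 * (w (i + r))\<^sup>2 + E'\<^sup>2 * (wt (i + r))\<^sup>2)"
      using interior[of i] by (simp add: power_mult_distrib mult.commute)
    finally show ?thesis using dx_pos by (simp add: dxof_eq mult_left_mono)
  qed
  have "(\<lambda>i. 3 * dx * (K * G i + E\<^sup>2 * (w (i + r))\<^sup>2 + E'\<^sup>2 * (wt (i + r))\<^sup>2))
      sums (3 * dx * (K * (\<Sum>i. G i) + E\<^sup>2 * w_energy + E'\<^sup>2 * wt_energy))"
    unfolding w_energy_def wt_energy_def
    by (intro sums_mult sums_add summable_sums G(1) summable_w_square summable_wt_square)
  from summable_suminf_le_of_sums[OF _ pointwise this]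
  have "summable (\<lambda>i. dxof lam dt * \<bar>eps_err u0 a lam dt k alpha beta w wt r p A (i + r) n\<bar>\<^sup>2)
    \<and> (\<Sum>i. dxof lam dt * \<bar>eps_err u0 a lam dt k alpha beta w wt r p A (i + r) n\<bar>\<^sup>2)
      \<le> 3 * dx * (K * (\<Sum>i. G i) + E\<^sup>2 * w_energy + E'\<^sup>2 * wt_energy)"
    using dx_pos by (simp add: dxof_eq)
  moreover have "K * (\<Sum>i. G i) \<le> K * (real (nat \<lceil>lam * h_int\<rceil>) * L2sq u2)"
    using G(2) dt_pos window_consts_nonneg by (intro mult_left_mono) (auto simp: K_def)
  ultimately show ?thesis
    using dx_pos by (auto simp: K_def intro: order_trans mult_left_mono)
qed

lemma eps_err_late:
  assumes "2 * k \<le> n" "K_late \<le> C"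
  shows "summable (\<lambda>i. dxof lam dt * \<bar>eps_err u0 a lam dt k alpha beta w wt r p A (i + r) n\<bar>\<^sup>2)
    \<and> (\<Sum>i. dxof lam dt * \<bar>eps_err u0 a lam dt k alpha beta w wt r p A (i + r) n\<bar>\<^sup>2)
      \<le> C * dt\<^sup>2 * L2sq u2"
proof -
  define m where "m = n - k"
  have m: "k \<le> m" using assms by (simp add: m_def)
  have window: "0 \<le> integral {c * (real m * dt) .. c * (real m * dt) + dt * h_tr} (\<lambda>t. \<bar>u2 t\<bar>)"
    "(integral {c * (real m * dt) .. c * (real m * dt) + dt * h_tr} (\<lambda>t. \<bar>u2 t\<bar>))\<^sup>2 \<le> dt * h_tr * L2sq u2"
    using integral_abs_nonneg[OF L2_u2 time_offset_nonneg]
      integral_abs_square_le_L2sq(2)[OF L2_u2 time_offset_nonneg mult_nonneg_nonneg] dt_pos window_consts_nonneg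
    by auto
  have E: "(w_residual primitive m)\<^sup>2 \<le> (m_w * h_tr\<^sup>2)\<^sup>2 * (dt * h_tr * L2sq u2)"
    by (rule square_le_of_abs_le[OF w_residual_estimate[OF m] window])
  have E': "(wt_residual primitive m)\<^sup>2 \<le> (m_wt * h_tr\<^sup>2)\<^sup>2 * (dt * h_tr * L2sq u2)"
    by (rule square_le_of_abs_le[OF wt_residual_estimate[OF m] window])
  define K where "K = (m_int * h_int\<^sup>2)\<^sup>2 * (dt * h_int)"
  have "3 * dx * (K * (real (nat \<lceil>lam * h_int\<rceil>) * L2sq u2)
        + (w_residual primitive m)\<^sup>2 * w_energy + (wt_residual primitive m)\<^sup>2 * wt_energy)
      \<le> 3 * dx * (K * (real (nat \<lceil>lam * h_int\<rceil>) * L2sq u2)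
        + (m_w * h_tr\<^sup>2)\<^sup>2 * (dt * h_tr * L2sq u2) * w_energy
        + (m_wt * h_tr\<^sup>2)\<^sup>2 * (dt * h_tr * L2sq u2) * wt_energy)"
    using E E' energies_nonneg dx_pos
    by (intro mult_left_mono add_mono mult_right_mono order_refl) auto
  also have "\<dots> = K_late * dt\<^sup>2 * L2sq u2"
    using lam_pos by (simp add: K_def K_late_def dx_def field_simps power2_eq_square)
  also have "\<dots> \<le> C * dt\<^sup>2 * L2sq u2"
    using assms(2) L2sq_nonneg[OF L2_u2] by (intro mult_right_mono) auto
  finally show ?thesis
    using eps_err_energy_le[of n] assms(1) by (simp add: m_def K_def)
qed

lemma eps_err_early:
  assumes "k \<le> n" "n < 2 * k" "dt \<le> 1" "K_early \<le> C"
  shows "summable (\<lambda>i. dxof lam dt * \<bar>eps_err u0 a lam dt k alpha beta w wt r p A (i + r) n\<bar>\<^sup>2)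
    \<and> (\<Sum>i. dxof lam dt * \<bar>eps_err u0 a lam dt k alpha beta w wt r p A (i + r) n\<bar>\<^sup>2)
      \<le> C * dt * (L2sq u1 + L2sq u2)"
proof -
  define m where "m = n - k"
  define L where "L = L2sq u1 + L2sq u2"
  have m: "m < k" using assms by (simp add: m_def)
  have L: "0 \<le> L2sq u1" "0 \<le> L2sq u2" using L2sq_nonneg L2_u1 L2_u2 by auto
  have sup: "0 \<le> sqrt (2 * L)" "(sqrt (2 * L))\<^sup>2 \<le> 2 * L" using L by (simp_all add: L_def)
  have E: "(w_residual primitive m)\<^sup>2 \<le> (m_w * h_start\<^sup>2)\<^sup>2 * (2 * L)"
    by (rule square_le_of_abs_le[OF _ sup]) (use w_residual_start[OF m] in \<open>simp add: L_def\<close>)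
  have E': "(wt_residual primitive m)\<^sup>2 \<le> (m_wt * h_start\<^sup>2)\<^sup>2 * (2 * L)"
    by (rule square_le_of_abs_le[OF _ sup]) (use wt_residual_start[OF m] in \<open>simp add: L_def\<close>)
  define K where "K = (m_int * h_int\<^sup>2)\<^sup>2 * h_int * real (nat \<lceil>lam * h_int\<rceil>)"
  have "0 \<le> K" using window_consts_nonneg by (simp add: K_def)
  \<comment> \<open>here \<open>\<Delta>t \<le> 1\<close> trades the factor \<open>\<Delta>t\<close> of the interior term for the weaker norm\<close>
  hence "K * dt * L2sq u2 \<le> K * L"
    using assms(3) dt_pos L by (simp add: L_def mult_left_le mult_mono)
  hence "3 * dx * ((m_int * h_int\<^sup>2)\<^sup>2 * (dt * h_int) * (real (nat \<lceil>lam * h_int\<rceil>) * L2sq u2)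
        + (w_residual primitive m)\<^sup>2 * w_energy + (wt_residual primitive m)\<^sup>2 * wt_energy)
      \<le> 3 * dx * (K * L + (m_w * h_start\<^sup>2)\<^sup>2 * (2 * L) * w_energy
        + (m_wt * h_start\<^sup>2)\<^sup>2 * (2 * L) * wt_energy)"
    using E E' energies_nonneg dx_pos
    by (intro mult_left_mono add_mono mult_right_mono) (auto simp: K_def algebra_simps)
  also have "\<dots> = K_early * dt * L"
    using lam_pos by (simp add: K_def K_early_def dx_def field_simps)
  also have "\<dots> \<le> C * dt * L"
    using assms(4) dt_pos L by (intro mult_right_mono) (auto simp: L_def)
  finally show ?thesis
    using eps_err_energy_le[OF assms(1)] by (simp add: m_def L_def)
qed

lemma eta_err_energy:
  assumes "K_eta \<le> C"
  shows "summable (\<lambda>i. \<Sum>j<r. dt * \<bar>eta_err u0 a lam dt k alpha beta w wt j (i + k)\<bar>\<^sup>2)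
    \<and> (\<Sum>i. \<Sum>j<r. dt * \<bar>eta_err u0 a lam dt k alpha beta w wt j (i + k)\<bar>\<^sup>2) \<le> C * dt\<^sup>2 * L2sq u1"
proof -
  define s where "s = c * (real k * dt)"
  have s: "0 \<le> s" unfolding s_def by (rule time_offset_nonneg)
  have node: "c * (real (i + k) * dt) = s + real i * (c * dt)" for i by (simp add: s_def algebra_simps)
  have window: "dt * h_bdry = (h_bdry / c) * (c * dt)" using c_pos by simp
  define G where "G i = integral {s + real i * (c * dt) .. s + real i * (c * dt) + dt * h_bdry} (\<lambda>t. (u1 t)\<^sup>2)" for i
  have "0 \<le> h_bdry / c" using c_pos window_consts_nonneg by simp
  note windows = summable_window_integrals[OF L2_u1 s c_dt_pos this]
  have G: "summable G" "(\<Sum>i. G i) \<le> real (nat \<lceil>h_bdry / c\<rceil>) * L2sq u1"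
    unfolding G_def window by (fact windows(1), fact windows(2))
  define K where "K = real r * dt * (m_bdry * h_bdry)\<^sup>2 * (dt * h_bdry)"
  have "(boundary_residual primitive j (i + k))\<^sup>2 \<le> (m_bdry * h_bdry)\<^sup>2 * (dt * h_bdry * G i)" if "j < r" for i j
  proof (rule square_le_of_abs_le)
    have "0 \<le> s + real i * (c * dt)" using s c_dt_pos by simp
    thus "0 \<le> integral {s + real i * (c * dt) .. s + real i * (c * dt) + dt * h_bdry} (\<lambda>t. \<bar>u1 t\<bar>)"
      "(integral {s + real i * (c * dt) .. s + real i * (c * dt) + dt * h_bdry} (\<lambda>t. \<bar>u1 t\<bar>))\<^sup>2
        \<le> dt * h_bdry * G i"
      using integral_abs_nonneg[OF L2_u1] integral_abs_square_le_L2sq(1)[OF L2_u1 _ mult_nonneg_nonneg]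
        dt_pos window_consts_nonneg by (auto simp: G_def)
    show "\<bar>boundary_residual primitive j (i + k)\<bar>
      \<le> m_bdry * h_bdry * integral {s + real i * (c * dt) .. s + real i * (c * dt) + dt * h_bdry} (\<lambda>t. \<bar>u1 t\<bar>)"
      using boundary_residual_estimate[OF that, of "i + k"] unfolding node .
  qed
  hence "(\<Sum>j<r. dt * \<bar>eta_err u0 a lam dt k alpha beta w wt j (i + k)\<bar>\<^sup>2) \<le> K * G i" for i
    using sum_mono[of "{..<r}" "\<lambda>j. dt * \<bar>eta_err u0 a lam dt k alpha beta w wt j (i + k)\<bar>\<^sup>2"
        "\<lambda>j. dt * ((m_bdry * h_bdry)\<^sup>2 * (dt * h_bdry * G i))"] dt_pos
    by (simp add: eta_err_eq K_def mult_left_mono algebra_simps)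
  from summable_suminf_le_of_sums[OF _ this sums_mult[OF summable_sums[OF G(1)], of K]]
  have "summable (\<lambda>i. \<Sum>j<r. dt * \<bar>eta_err u0 a lam dt k alpha beta w wt j (i + k)\<bar>\<^sup>2)
    \<and> (\<Sum>i. \<Sum>j<r. dt * \<bar>eta_err u0 a lam dt k alpha beta w wt j (i + k)\<bar>\<^sup>2) \<le> K * (\<Sum>i. G i)"
    using dt_pos by (simp add: sum_nonneg)
  moreover have "K * (\<Sum>i. G i) \<le> K * (real (nat \<lceil>h_bdry / c\<rceil>) * L2sq u1)"
    using G(2) dt_pos window_consts_nonneg by (intro mult_left_mono) (auto simp: K_def)
  moreover have "K * (real (nat \<lceil>h_bdry / c\<rceil>) * L2sq u1) = K_eta * dt\<^sup>2 * L2sq u1"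
    by (simp add: K_def K_eta_def power2_eq_square)
  moreover have "K_eta * dt\<^sup>2 * L2sq u1 \<le> C * dt\<^sup>2 * L2sq u1"
    using assms L2sq_nonneg[OF L2_u1] by (intro mult_right_mono) auto
  ultimately show ?thesis by linarith
qed

lemma consistency_error_bounds:
  assumes "dt \<le> 1" "1 \<le> k" "K_late \<le> C" "K_early \<le> C" "K_eta \<le> C"
  shows "(\<forall>n\<ge>2 * k.
           summable (\<lambda>i. dxof lam dt * \<bar>eps_err u0 a lam dt k alpha beta w wt r p A (i + r) n\<bar>\<^sup>2)
         \<and> (\<Sum>i. dxof lam dt * \<bar>eps_err u0 a lam dt k alpha beta w wt r p A (i + r) n\<bar>\<^sup>2)
             \<le> C * dt\<^sup>2 * L2sq u2)
      \<and> (\<forall>n. k \<le> n \<and> n \<le> 2 * k - 1 \<longrightarrow>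
           summable (\<lambda>i. dxof lam dt * \<bar>eps_err u0 a lam dt k alpha beta w wt r p A (i + r) n\<bar>\<^sup>2)
         \<and> (\<Sum>i. dxof lam dt * \<bar>eps_err u0 a lam dt k alpha beta w wt r p A (i + r) n\<bar>\<^sup>2)
             \<le> C * dt * (L2sq u1 + L2sq u2))
      \<and> summable (\<lambda>i. \<Sum>j<r. dt * \<bar>eta_err u0 a lam dt k alpha beta w wt j (i + k)\<bar>\<^sup>2)
      \<and> (\<Sum>i. \<Sum>j<r. dt * \<bar>eta_err u0 a lam dt k alpha beta w wt j (i + k)\<bar>\<^sup>2)
             \<le> C * dt\<^sup>2 * L2sq u1"
  using assms
  apply (intro conjI allI impI)
       apply (erule eps_err_late[THEN conjunct1]; simp)
      apply (erule eps_err_late[THEN conjunct2]; simp)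
     apply (rule eps_err_early[THEN conjunct1]; auto)
    apply (rule eps_err_early[THEN conjunct2]; auto)
   apply (rule eta_err_energy[THEN conjunct1]; simp)
  apply (rule eta_err_energy[THEN conjunct2]; simp)
  done

end

theorem proposition3p2:
  fixes a lam :: real and r p k :: nat and A :: "int \<Rightarrow> real"
    and alpha beta :: "nat \<Rightarrow> real" and w wt :: "nat \<Rightarrow> real"
  assumes a_neg: "a < 0"
    and A_ends: "A (- int r) \<noteq> 0" "A (int p) \<noteq> 0"
    and k_pos: "k \<ge> 1"
    and alpha_k: "alpha k = 1"
    and ab0: "\<bar>alpha 0\<bar> + \<bar>beta 0\<bar> > 0"
    and lam_pos: "lam > 0"
    and A1: "(\<Sum>l = - int r..int p. A l) = 0" "(\<Sum>l = - int r..int p. of_int l * A l) = a"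
    and A2: "(\<Sum>\<sigma>\<le>k. alpha \<sigma>) = 0" "(\<Sum>\<sigma>\<le>k. real \<sigma> * alpha \<sigma>) = (\<Sum>\<sigma><k. beta \<sigma>)"
    and A3: "stability_A3 lam r p A k alpha beta"
    and A4: "\<forall>\<theta>\<in>{-pi..pi} - {0}. (\<Sum>l = - int r..int p. complex_of_real (A l) * cis \<theta> powi l) \<noteq> 0"
    and w_init: "\<forall>j<r. w j = -1"
    and w_rec: "\<forall>j. (\<Sum>l = - int r..int p. A l * w (nat (int j + l + int r))) = 0"
    and w_lim: "w \<longlonglongrightarrow> 0"
    and wt_rec: "\<forall>j\<ge>r. (\<Sum>l = - int r..int p. A l * wt (nat (int j + l))) + w j = 0"
    and wt_init: "\<forall>j<r. wt j = 0"
    and wt_lim: "wt \<longlonglongrightarrow> 0"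
  shows "\<exists>C>0. \<forall>u0 u1 u2. H2_Rplus u0 u1 u2 \<and> u0 0 = 0 \<longrightarrow>
     (\<forall>dt. 0 < dt \<and> dt \<le> 1 \<longrightarrow>
        (\<forall>n\<ge>2 * k.
           summable (\<lambda>i. dxof lam dt * \<bar>eps_err u0 a lam dt k alpha beta w wt r p A (i + r) n\<bar>\<^sup>2)
         \<and> (\<Sum>i. dxof lam dt * \<bar>eps_err u0 a lam dt k alpha beta w wt r p A (i + r) n\<bar>\<^sup>2)
             \<le> C * dt\<^sup>2 * L2sq u2)
      \<and> (\<forall>n. k \<le> n \<and> n \<le> 2 * k - 1 \<longrightarrow>
           summable (\<lambda>i. dxof lam dt * \<bar>eps_err u0 a lam dt k alpha beta w wt r p A (i + r) n\<bar>\<^sup>2)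
         \<and> (\<Sum>i. dxof lam dt * \<bar>eps_err u0 a lam dt k alpha beta w wt r p A (i + r) n\<bar>\<^sup>2)
             \<le> C * dt * (L2sq u1 + L2sq u2))
      \<and> summable (\<lambda>i. \<Sum>j<r. dt * \<bar>eta_err u0 a lam dt k alpha beta w wt j (i + k)\<bar>\<^sup>2)
      \<and> (\<Sum>i. \<Sum>j<r. dt * \<bar>eta_err u0 a lam dt k alpha beta w wt j (i + k)\<bar>\<^sup>2)
             \<le> C * dt\<^sup>2 * L2sq u1)"
proof -
  interpret boundary_layers a lam r p k A alpha beta w wt
    using a_neg lam_pos A1 A2 A_ends(2) w_init w_rec w_lim wt_rec wt_init wt_lim by unfold_locales auto
  define C where "C = K_late + K_early + K_eta + 1"
  have C: "0 < C" "K_late \<le> C" "K_early \<le> C" "K_eta \<le> C"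
    using error_consts_nonneg by (auto simp: C_def)
  show ?thesis
    apply (rule exI[of _ C], rule conjI[OF C(1)], intro allI impI)
    subgoal premises prems for u0 u1 u2 dt
    proof -
      interpret scheme_with_H2_data a lam r p k A alpha beta dt w wt u0 u1 u2
        using prems by unfold_locales auto
      show ?thesis by (rule consistency_error_bounds) (use prems k_pos C in auto)
    qed
    done
qed

end
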